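(* Let $H$ be a real Hilbert space, $I=\{1,\dots,M\}$, let $f_i,h_i,T_i$ ($i\in I$) satisfy Assumption (A1)–(A4) and the parameters satisfy Condition (C) (described below). Consider the sequences generated by the Distributed Accelerated Parallel Algorithm below, and assume that for each $i\in I$ the sequence $\{y^{(i)}_n\}$ is bounded. Then for each $i\in I$, $$\lim_{n\to\infty}\|z_n-y^{(i)}_n\|=\lim_{n\to\infty}\|x_n-y^{(i)}_n\|=\lim_{n\to\infty}\|T_i(x_n)-x_n\|=0.$$
   Context: Assumption (A1): each $f_i:H\to\mathbb{R}$ is continuous and convex. (A2): each $h_i:H\to\mathbb{R}$ is convex and Fréchet differentiable, and $\nabla h_i$ is $(1/L_i)$-Lipschitz continuous for some $L_i>0$. (A3): each $T_i:H\to H$ is firmly nonexpansive, i.e. $\|T_ix-T_iy\|^2\le\langle T_ix-T_iy,x-y\rangle$ for all $x,y$. (A4): $S=\bigcap_{i=1}^M\mathrm{Fix}\,T_i\neq\emptyset$ and, with $\psi=\sum_{i=1}^M(f_i+h_i)$, $\Omega=\{\hat x\in S:\psi(\hat x)=\min_{x\in S}\psi(x)\}\neq\emptyset$. Condition (C): $\{\theta_n\},\{\lambda_n\},\{\beta_n\},\{\alpha_n\}$ are decreasing real sequences converging to $0$ with $\theta_n\in[0,1)$, $\lambda_n\in(0,2\min_{i\in I}L_i]$, $\beta_n\in(0,1]$, $\alpha_n\in(0,1]$, and: (C1) $\sum_n\alpha_n=\infty$; (C2) $\lim_n\frac{1}{\alpha_{n+1}}\big|\frac{1}{\lambda_{n+1}}-\frac{1}{\lambda_n}\big|=0$;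 (C3) $\lim_n\frac{1}{\lambda_{n+1}}\big|1-\frac{\alpha_n}{\alpha_{n+1}}\big|=0$; (C4) $\lim_n\frac{\alpha_n}{\lambda_n}=0$; (C5) $\lim_n\frac{\theta_n}{\alpha_{n+1}\lambda_{n+1}}=0$; (C6) $\frac{\lambda_n}{\lambda_{n+1}}\le\sigma$ for some $\sigma\ge1$; (C7) $\lim_n\frac{\beta_n}{\alpha_{n+1}}=0$. $\mathrm{prox}_{\lambda g}(x)=\arg\min_y\{g(y)+\frac{1}{2\lambda}\|x-y\|^2\}$. Distributed Accelerated Parallel Algorithm: choose $z_0,x_0,x_1\in H$, $u^{(i)}\in H$ and set $d^{(i)}_1=-\nabla h_i(z_0)$ ($i\in I$). For $n=1,2,\dots$: compute $z_n=x_n+\theta_n(x_n-x_{n-1})$; for $i=1,\dots,M$ compute $d^{(i)}_{n+1}=-\nabla h_i(z_n)+\beta_nd^{(i)}_n$, $y^{(i)}_n=\mathrm{prox}_{\lambda_nf_i}(z_n+\lambda_nd^{(i)}_{n+1})$, $w^{(i+1)}_n=\alpha_nu^{(i)}+(1-\alpha_n)T_i(y^{(i)}_n)$; then set $x_{n+1}=\frac1M\sum_{i=1}^Mw^{(i+1)}_n$. *)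

theory Defs
  imports "HOL-Analysis.Analysis"
begin

definition prox :: "real \<Rightarrow> ('a::real_inner \<Rightarrow> real) \<Rightarrow> 'a \<Rightarrow> 'a" where
  "prox lam g x = (THE y. \<forall>v. g y + (1 / (2 * lam)) * (norm (x - y))\<^sup>2
                              \<le> g v + (1 / (2 * lam)) * (norm (x - v))\<^sup>2)"

definition firmly_nonexpansive :: "('a::real_inner \<Rightarrow> 'a) \<Rightarrow> bool" where
  "firmly_nonexpansive T \<longleftrightarrow> (\<forall>x y. (norm (T x - T y))\<^sup>2 \<le> inner (T x - T y) (x - y))"

end

theory Submission
  imports Defs
begin

text \<open>
Fix a common fixed point p of the T i. Once lam n \<le> L i, the forward step
v \<mapsto> v - lam n * grad i v is nonexpansive (the gradient is cocoercive), and the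
variational inequality of the proximal map shows that y i moves at most as much as its
argument plus \<bar>1 - lam (n+1) / lam n\<bar> times a bounded quantity. As all iterates are bounded,
averaging over i gives
  \<parallel>x (n+2) - x (n+1)\<parallel> \<le> (1 - \<alpha> (n+1)) \<parallel>x (n+1) - x n\<parallel> + \<alpha> (n+1) b n
with b n \<longrightarrow> 0 by (C2), (C3), (C5), (C7), so Xu's lemma gives \<parallel>x (n+1) - x n\<parallel> \<longrightarrow> 0 and hence
z n - x n \<longrightarrow> 0. Testing the variational inequality with p and using firm nonexpansiveness of
the T j bounds \<Sum>j. \<parallel>z n - y j n\<parallel>^2 + \<parallel>T j (y j n) - y j n\<parallel>^2 by
M (\<parallel>z n - p\<parallel>^2 - \<parallel>x (n+1) - p\<parallel>^2 + O(lam n + \<alpha> n)), which tends to 0 because z n - x (n+1) \<longrightarrow> 0.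
The three limits then follow from the triangle inequality and nonexpansiveness of T i.
\<close>

section \<open>Hilbert space identities and firmly nonexpansive maps\<close>

lemma norm_add_sq:
  fixes a b :: "'a::real_inner"
  shows "(norm (a + b))\<^sup>2 = (norm a)\<^sup>2 + 2 * inner a b + (norm b)\<^sup>2"
  by (simp add: power2_norm_eq_inner inner_simps inner_commute[of b a])

lemma norm_diff_sq:
  fixes a b :: "'a::real_inner"
  shows "(norm (a - b))\<^sup>2 = (norm a)\<^sup>2 - 2 * inner a b + (norm b)\<^sup>2"
  by (simp add: power2_norm_eq_inner inner_simps inner_commute[of b a])

lemma norm_midpoint_dist_sq:
  fixes x a b :: "'a::real_inner"
  shows "(norm (x - (1/2) *\<^sub>R (a + b)))\<^sup>2 = ((norm (x - a))\<^sup>2 + (norm (x - b))\<^sup>2) / 2 - (norm (a - b))\<^sup>2 / 4"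
proof -
  have half: "(norm ((1/2) *\<^sub>R (c + d)))\<^sup>2 = ((norm c)\<^sup>2 + (norm d)\<^sup>2) / 2 - (norm (d - c))\<^sup>2 / 4"
    for c d :: 'a
    unfolding norm_scaleR power_mult_distrib power2_norm_eq_inner inner_simps inner_commute[of d c]
    by (simp add: field_simps)
  have "x - (1/2) *\<^sub>R (a + b) = (1/2) *\<^sub>R ((x - a) + (x - b))"
    by (simp add: algebra_simps flip: scaleR_2)
  moreover have "(x - b) - (x - a) = a - b"
    by simp
  ultimately show ?thesis
    using half[of "x - a" "x - b"] by (simp only:)
qed

lemma norm_sq_diff_le:
  fixes a b :: "'a::real_normed_vector"
  shows "\<bar>(norm a)\<^sup>2 - (norm b)\<^sup>2\<bar> \<le> norm (a - b) * (norm a + norm b)"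
proof -
  have "(norm a)\<^sup>2 - (norm b)\<^sup>2 = (norm a - norm b) * (norm a + norm b)"
    by (simp add: power2_eq_square algebra_simps)
  then have "\<bar>(norm a)\<^sup>2 - (norm b)\<^sup>2\<bar> = \<bar>norm a - norm b\<bar> * (norm a + norm b)"
    by (simp add: abs_mult)
  also have "\<dots> \<le> norm (a - b) * (norm a + norm b)"
    by (intro mult_right_mono norm_triangle_ineq3) simp
  finally show ?thesis .
qed

lemma norm_average_le:
  fixes a :: "'i \<Rightarrow> 'a::real_normed_vector"
  assumes "finite I" "I \<noteq> {}" "\<And>i. i \<in> I \<Longrightarrow> norm (a i) \<le> B"
  shows "norm ((1 / real (card I)) *\<^sub>R (\<Sum>i\<in>I. a i)) \<le> B"
proof -
  have "norm (\<Sum>i\<in>I. a i) \<le> real (card I) * B"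
    using norm_sum[of a I] sum_bounded_above[of I "\<lambda>i. norm (a i)" B] assms(3) by simp
  moreover have "card I > 0"
    using assms card_gt_0_iff by blast
  ultimately show ?thesis
    by (simp add: field_simps)
qed

lemma norm_average_sq_le:
  fixes a :: "'i \<Rightarrow> 'a::real_normed_vector"
  assumes "finite I" "I \<noteq> {}"
  shows "(norm ((1 / real (card I)) *\<^sub>R (\<Sum>i\<in>I. a i)))\<^sup>2 \<le> (1 / real (card I)) * (\<Sum>i\<in>I. (norm (a i))\<^sup>2)"
proof -
  have n: "real (card I) > 0"
    using assms by (simp add: card_gt_0_iff)
  have "(norm (\<Sum>i\<in>I. a i))\<^sup>2 \<le> (\<Sum>i\<in>I. norm (a i))\<^sup>2"
    by (intro power_mono norm_sum) simp
  also have "\<dots> \<le> real (card I) * (\<Sum>i\<in>I. (norm (a i))\<^sup>2)"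
    using sum_squared_le_sum_of_squares[of "\<lambda>i. norm (a i)" I] by (simp only: mult.commute)
  finally have sq: "(norm (\<Sum>i\<in>I. a i))\<^sup>2 \<le> real (card I) * (\<Sum>i\<in>I. (norm (a i))\<^sup>2)" .
  have "(norm ((1 / real (card I)) *\<^sub>R (\<Sum>i\<in>I. a i)))\<^sup>2 = (norm (\<Sum>i\<in>I. a i))\<^sup>2 / (real (card I))\<^sup>2"
    using n by (simp add: power_divide)
  also have "\<dots> \<le> real (card I) * (\<Sum>i\<in>I. (norm (a i))\<^sup>2) / (real (card I))\<^sup>2"
    using sq by (rule divide_right_mono) simp
  also have "\<dots> = (1 / real (card I)) * (\<Sum>i\<in>I. (norm (a i))\<^sup>2)"
    using n by (simp add: power2_eq_square)
  finally show ?thesis .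
qed

lemma firmly_nonexpansive_imp_nonexpansive:
  assumes "firmly_nonexpansive T"
  shows "norm (T a - T b) \<le> norm (a - b)"
proof -
  have "(norm (T a - T b))\<^sup>2 \<le> norm (T a - T b) * norm (a - b)"
    using assms norm_cauchy_schwarz[of "T a - T b" "a - b"]
    unfolding firmly_nonexpansive_def by (meson order_trans)
  then show ?thesis
    by (cases "T a = T b") (auto simp: power2_eq_square)
qed

lemma firmly_nonexpansive_fixpoint_ineq:
  assumes "firmly_nonexpansive T" and "T p = p"
  shows "(norm (T a - p))\<^sup>2 \<le> (norm (a - p))\<^sup>2 - (norm (T a - a))\<^sup>2"
proof -
  have "(norm (T a - p))\<^sup>2 \<le> inner (T a - p) (a - p)"
    using assms unfolding firmly_nonexpansive_def by metis
  moreover have "(norm (T a - a))\<^sup>2 = (norm (T a - p))\<^sup>2 - 2 * inner (T a - p) (a - p) + (norm (a - p))\<^sup>2"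
    using norm_diff_sq[of "T a - p" "a - p"] by simp
  ultimately show ?thesis
    by linarith
qed

section \<open>Convex functions with Lipschitz gradient\<close>

lemma convex_gradient_ineq:
  fixes h :: "'a::real_inner \<Rightarrow> real"
  assumes cv: "convex_on UNIV h"
    and der: "\<And>v. (h has_derivative (\<lambda>t. inner (g v) t)) (at v)"
  shows "h x + inner (g x) (y - x) \<le> h y"
proof -
  define k where "k = (\<lambda>t::real. h (x + t *\<^sub>R (y - x)))"
  have "convex_on UNIV k"
  proof (rule convex_onI)
    fix t a b :: real
    assume t: "0 < t" "t < 1"
    have "x + ((1 - t) * a + t * b) *\<^sub>R (y - x)
        = (1 - t) *\<^sub>R (x + a *\<^sub>R (y - x)) + t *\<^sub>R (x + b *\<^sub>R (y - x))"
      by (simp add: algebra_simps)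
    then show "k ((1 - t) *\<^sub>R a + t *\<^sub>R b) \<le> (1 - t) * k a + t * k b"
      unfolding k_def using convex_onD[OF cv, of t] t by simp
  qed auto
  moreover have "(k has_field_derivative inner (g x) (y - x)) (at 0)"
  proof -
    have "((\<lambda>t. x + t *\<^sub>R (y - x)) has_derivative (\<lambda>s. s *\<^sub>R (y - x))) (at 0)"
      by (auto intro!: derivative_eq_intros)
    from has_derivative_compose[OF this der[of "x + 0 *\<^sub>R (y - x)"]]
    show ?thesis
      by (simp add: k_def o_def has_field_derivative_def mult.commute[of _ "inner (g x) (y - x)"])
  qed
  ultimately have "inner (g x) (y - x) * (1 - 0) \<le> k 1 - k 0"
    by (intro convex_on_imp_above_tangent) auto
  then show ?thesis
    by (simp add: k_def)
qed

lemma lipschitz_gradient_upper_bound: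
  fixes h :: "'a::real_inner \<Rightarrow> real"
  assumes der: "\<And>v. (h has_derivative (\<lambda>t. inner (g v) t)) (at v)"
    and lip: "\<And>a b. norm (g a - g b) \<le> C * norm (a - b)" and C: "C \<ge> 0"
  shows "h (u + v) \<le> h u + inner (g u) v + C * (norm v)\<^sup>2"
proof -
  define k where "k = (\<lambda>t::real. h (u + t *\<^sub>R v))"
  have "(k has_derivative (\<lambda>s. s * inner (g (u + t *\<^sub>R v)) v)) (at t within {0..1})" for t
  proof -
    have "((\<lambda>t. u + t *\<^sub>R v) has_derivative (\<lambda>s. s *\<^sub>R v)) (at t within {0..1})"
      by (auto intro!: derivative_eq_intros)
    from has_derivative_in_compose[OF this has_derivative_at_withinI[OF der]]
    show ?thesis
      by (simp add: k_def o_def)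
  qed
  then obtain t where t: "t \<in> {0<..<1}" and mvt: "k 1 - k 0 = (1 - 0) * inner (g (u + t *\<^sub>R v)) v"
    using mvt_simple[of 0 1 k "\<lambda>t s. s * inner (g (u + t *\<^sub>R v)) v"] by auto
  have "inner (g (u + t *\<^sub>R v)) v = inner (g u) v + inner (g (u + t *\<^sub>R v) - g u) v"
    by (simp add: inner_diff_left)
  also have "\<dots> \<le> inner (g u) v + norm (g (u + t *\<^sub>R v) - g u) * norm v"
    using norm_cauchy_schwarz by simp
  also have "\<dots> \<le> inner (g u) v + C * (t * norm v) * norm v"
    using lip[of "u + t *\<^sub>R v" u] t by (simp add: mult_right_mono)
  also have "\<dots> \<le> inner (g u) v + C * norm v * norm v"
    using t C by (simp add: mult_left_le_one_le mult.assoc mult_left_mono)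
  finally show ?thesis
    using mvt by (simp add: k_def power2_eq_square mult.assoc)
qed

lemma gradient_cocoercive:
  fixes h :: "'a::real_inner \<Rightarrow> real"
  assumes cv: "convex_on UNIV h"
    and der: "\<And>v. (h has_derivative (\<lambda>t. inner (g v) t)) (at v)"
    and lip: "\<And>a b. norm (g a - g b) \<le> (1 / L) * norm (a - b)" and L: "L > 0"
  shows "(L / 2) * (norm (g a - g b))\<^sup>2 \<le> inner (g a - g b) (a - b)"
proof -
  have key: "h x + inner (g x) (y - x) + (L / 4) * (norm (g y - g x))\<^sup>2 \<le> h y" for x y
  proof -
    \<comment> \<open>Compare the tangent at x with the descent bound at y along the step -(L/2)(g y - g x).\<close>
    define v where "v = - (L / 2) *\<^sub>R (g y - g x)"
    have "h (y + v) \<le> h y + inner (g y) v + (1 / L) * (norm v)\<^sup>2"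
      using L by (intro lipschitz_gradient_upper_bound[OF der lip]) simp
    moreover have "h x + inner (g x) (y - x) + inner (g x) v \<le> h (y + v)"
      using convex_gradient_ineq[OF cv der, of x "y + v"] by (simp add: inner_simps)
    moreover have "(1 / L) * (norm v)\<^sup>2 = (L / 4) * (norm (g y - g x))\<^sup>2"
      using L by (simp add: v_def power_mult_distrib power2_eq_square)
    moreover have "inner (g y) v - inner (g x) v = - (L / 2) * (norm (g y - g x))\<^sup>2"
      by (simp only: v_def flip: inner_diff_left) (simp add: power2_norm_eq_inner)
    ultimately show ?thesis
      by linarith
  qed
  have "h a + inner (g a) (b - a) + (L / 4) * (norm (g a - g b))\<^sup>2 \<le> h b"
    using key[of a b] by (simp add: norm_minus_commute)
  moreover have "inner (g a - g b) (a - b) = - inner (g a) (b - a) - inner (g b) (a - b)"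
    by (simp add: inner_simps)
  ultimately show ?thesis
    using key[of b a] by linarith
qed

lemma forward_step_nonexpansive:
  fixes h :: "'a::real_inner \<Rightarrow> real"
  assumes cv: "convex_on UNIV h"
    and der: "\<And>v. (h has_derivative (\<lambda>t. inner (g v) t)) (at v)"
    and lip: "\<And>a b. norm (g a - g b) \<le> (1 / L) * norm (a - b)" and L: "L > 0"
    and lam: "0 \<le> lam" "lam \<le> L"
  shows "norm ((a - lam *\<^sub>R g a) - (b - lam *\<^sub>R g b)) \<le> norm (a - b)"
proof -
  have coco: "(L / 2) * (norm (g a - g b))\<^sup>2 \<le> inner (g a - g b) (a - b)"
    by (rule gradient_cocoercive[OF cv der lip L])
  have "lam\<^sup>2 * (norm (g a - g b))\<^sup>2 \<le> lam * L * (norm (g a - g b))\<^sup>2"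
    using lam by (intro mult_right_mono) (auto simp: power2_eq_square mult_left_mono)
  also have "\<dots> \<le> 2 * lam * inner (g a - g b) (a - b)"
    using mult_left_mono[OF coco, of "2 * lam"] lam by (simp add: algebra_simps)
  finally have step: "lam\<^sup>2 * (norm (g a - g b))\<^sup>2 \<le> 2 * lam * inner (g a - g b) (a - b)" .
  have "(a - lam *\<^sub>R g a) - (b - lam *\<^sub>R g b) = (a - b) - lam *\<^sub>R (g a - g b)"
    by (simp add: algebra_simps)
  moreover have "(norm ((a - b) - lam *\<^sub>R (g a - g b)))\<^sup>2 \<le> (norm (a - b))\<^sup>2"
    using step norm_diff_sq[of "a - b" "lam *\<^sub>R (g a - g b)"] by (simp add: power_mult_distrib inner_commute)
  ultimately show ?thesis
    by (metis norm_ge_zero power2_le_imp_le)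
qed

lemma convex_continuous_affine_minorant:
  fixes f :: "'a::real_normed_vector \<Rightarrow> real"
  assumes "continuous_on UNIV f" and cv: "convex_on UNIV f"
  obtains A B where "B \<ge> 0" "\<And>y. A - B * norm y \<le> f y"
proof -
  have "isCont f 0"
    using assms(1) by (simp add: continuous_on_eq_continuous_at)
  then obtain r where r: "r > 0" and "\<forall>q. dist q 0 < r \<longrightarrow> dist (f q) (f 0) < 1"
    unfolding continuous_at_eps_delta using zero_less_one by blast
  then have near: "f q < f 0 + 1" if "norm q < r" for q
    using that by (auto simp: dist_real_def)
  have "f 0 - 2 / r - 2 / r * norm y \<le> f y" for y
  proof -
    \<comment> \<open>Write 0 as a convex combination of y and the short vector -k y.\<close>
    have ny: "norm y < 2 * (norm y + 1)" and pos: "0 < 2 * (norm y + 1)"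
      by (smt (verit) norm_ge_zero)+
    define k where "k = r / (2 * (norm y + 1))"
    define s where "s = k / (1 + k)"
    have k: "k > 0"
      unfolding k_def using r pos by (rule divide_pos_pos)
    have s: "0 < s" "s < 1"
      using k by (auto simp: s_def field_simps)
    have "k * norm y < k * (2 * (norm y + 1))"
      using k ny by simp
    also have "\<dots> = r"
      using pos by (simp add: k_def)
    finally have "f (- k *\<^sub>R y) < f 0 + 1"
      using k by (intro near) simp
    moreover have "s - (1 - s) * k = 0"
      using k by (simp add: s_def field_simps)
    then have comb: "(1 - (1 - s)) *\<^sub>R y + (1 - s) *\<^sub>R (- k *\<^sub>R y) = 0"
      by (simp add: algebra_simps flip: scaleR_diff_left)
    have "f ((1 - (1 - s)) *\<^sub>R y + (1 - s) *\<^sub>R (- k *\<^sub>R y)) \<le> (1 - (1 - s)) * f y + (1 - s) * f (- k *\<^sub>R y)"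
      using s by (intro convex_onD[OF cv]) auto
    then have "f 0 \<le> s * f y + (1 - s) * f (- k *\<^sub>R y)"
      unfolding comb by simp
    ultimately have "s * f 0 - (1 - s) \<le> s * f y"
      using s mult_strict_left_mono[of "f (- k *\<^sub>R y)" "f 0 + 1" "1 - s"] by (simp add: algebra_simps)
    then have "f 0 - (1 - s) / s \<le> f y"
      using s by (simp add: field_simps)
    moreover have "(1 - s) / s = 1 / k"
      using k by (simp add: s_def field_simps)
    moreover have "1 / k = 2 / r + 2 / r * norm y"
      using r by (simp add: k_def add_divide_distrib)
    ultimately show ?thesis
      by simp
  qed
  then show ?thesis
    using r by (intro that[of "2 / r" "f 0 - 2 / r"]) auto
qed

section \<open>The proximal map\<close>

lemma strongly_midpoint_convex_minimizing_seq_Cauchy: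
  fixes F :: "'a::real_normed_vector \<Rightarrow> real"
  assumes c: "c > 0"
    and mid: "\<And>a b. F ((1/2) *\<^sub>R (a + b)) \<le> (F a + F b) / 2 - c * (norm (a - b))\<^sup>2 / 4"
    and m_le: "\<And>v. m \<le> F v" and s: "\<And>k. F (s k) < m + 1 / Suc k"
  shows "Cauchy s"
proof (rule metric_CauchyI)
  fix e :: real
  assume e: "e > 0"
  have close: "c * (norm (s j - s k))\<^sup>2 / 4 < (1 / Suc j + 1 / Suc k) / 2" for j k
    using mid[of "s j" "s k"] m_le[of "(1/2) *\<^sub>R (s j + s k)"] s[of j] s[of k] by argo
  have "c * e\<^sup>2 / 4 > 0"
    using c e by simp
  then obtain N where N: "inverse (real (Suc N)) < c * e\<^sup>2 / 4"
    using reals_Archimedean by blast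
  have "dist (s j) (s k) < e" if "j \<ge> N" "k \<ge> N" for j k
  proof -
    have "1 / real (Suc j) \<le> inverse (real (Suc N))" "1 / real (Suc k) \<le> inverse (real (Suc N))"
      using that by (auto simp: inverse_eq_divide frac_le)
    then have "c * (norm (s j - s k))\<^sup>2 < c * e\<^sup>2"
      using close[of j k] N by argo
    then have "(norm (s j - s k))\<^sup>2 < e\<^sup>2"
      using c by simp
    then show ?thesis
      using e by (simp add: dist_norm power_less_imp_less_base)
  qed
  then show "\<exists>M. \<forall>m\<ge>M. \<forall>n\<ge>M. dist (s m) (s n) < e"
    by blast
qed

lemma strongly_midpoint_convex_unique_minimizer:
  fixes F :: "'a::{real_normed_vector, complete_space} \<Rightarrow> real"
  assumes cont: "continuous_on UNIV F" and bdd: "bdd_below (range F)" and c: "c > 0"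
    and mid: "\<And>a b. F ((1/2) *\<^sub>R (a + b)) \<le> (F a + F b) / 2 - c * (norm (a - b))\<^sup>2 / 4"
  shows "\<exists>!y. \<forall>v. F y \<le> F v"
proof -
  define m where "m = Inf (range F)"
  have m_le: "m \<le> F v" for v
    unfolding m_def using bdd by (simp add: cInf_lower)
  have "\<exists>y. F y < m + 1 / Suc k" for k
    using cInf_less_iff[of "range F" "m + 1 / Suc k"] bdd by (auto simp: m_def)
  then obtain s where s: "\<And>k. F (s k) < m + 1 / Suc k"
    by metis
  have "Cauchy s"
    using c mid m_le s by (rule strongly_midpoint_convex_minimizing_seq_Cauchy)
  then obtain y where lim: "s \<longlonglongrightarrow> y"
    using Cauchy_convergent_iff convergent_def by blast
  have "F y \<le> m + 0"
  proof (rule LIMSEQ_le)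
    show "(\<lambda>k. F (s k)) \<longlonglongrightarrow> F y"
      using continuous_on_tendsto_compose[OF cont lim] by simp
    show "(\<lambda>k. m + 1 / real (Suc k)) \<longlonglongrightarrow> m + 0"
      by (intro tendsto_intros LIMSEQ_inverse_real_of_nat[unfolded inverse_eq_divide])
    show "\<exists>N. \<forall>k\<ge>N. F (s k) \<le> m + 1 / real (Suc k)"
      using s less_imp_le by blast
  qed
  then have min: "\<forall>v. F y \<le> F v"
    using m_le by (metis add_0_right order_trans)
  show ?thesis
  proof (rule ex1I[of _ y])
    fix y'
    assume min': "\<forall>v. F y' \<le> F v"
    have "c * (norm (y' - y))\<^sup>2 / 4 \<le> 0"
      using mid[of y' y] min'[rule_format, of "(1/2) *\<^sub>R (y' + y)"] min'[rule_format, of y]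
        min[rule_format, of y'] by argo
    then show "y' = y"
      using c by (simp add: mult_le_0_iff)
  qed (fact min)
qed

lemma convex_plus_sq_dist_bdd_below:
  fixes f :: "'a::real_normed_vector \<Rightarrow> real"
  assumes cont: "continuous_on UNIV f" and cv: "convex_on UNIV f" and c: "c > 0"
  shows "bdd_below (range (\<lambda>y. f y + c * (norm (x - y))\<^sup>2))"
proof -
  obtain A B where B: "B \<ge> 0" and AB: "\<And>y. A - B * norm y \<le> f y"
    by (rule convex_continuous_affine_minorant[OF cont cv]) blast
  have "A - B * norm x - B\<^sup>2 / (4 * c) \<le> f y + c * (norm (x - y))\<^sup>2" for y
  proof -
    have "norm y \<le> norm x + norm (x - y)"
      using norm_triangle_ineq4[of x "x - y"] by simp
    then have "A - B * norm x - B * norm (x - y) \<le> f y"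
      using AB[of y] mult_left_mono[OF _ B] by (smt (verit) distrib_left)
    moreover have "c * (norm (x - y) - B / (2 * c))\<^sup>2 = c * (norm (x - y))\<^sup>2 - B * norm (x - y) + B\<^sup>2 / (4 * c)"
      using c by (simp add: power2_eq_square field_simps)
    moreover have "0 \<le> c * (norm (x - y) - B / (2 * c))\<^sup>2"
      using c by simp
    ultimately show ?thesis
      by linarith
  qed
  then show ?thesis
    by (intro bdd_belowI2)
qed

lemma convex_plus_sq_dist_midpoint:
  fixes f :: "'a::real_inner \<Rightarrow> real" and x :: 'a and c :: real
  assumes cv: "convex_on UNIV f"
  defines "F \<equiv> \<lambda>y. f y + c * (norm (x - y))\<^sup>2"
  shows "F ((1/2) *\<^sub>R (a + b)) \<le> (F a + F b) / 2 - c * (norm (a - b))\<^sup>2 / 4"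
proof -
  have "f ((1 - 1/2) *\<^sub>R a + (1/2) *\<^sub>R b) \<le> (1 - 1/2) * f a + (1/2) * f b"
    by (intro convex_onD[OF cv]) auto
  then have "f ((1/2) *\<^sub>R (a + b)) \<le> (f a + f b) / 2"
    by (simp add: scaleR_add_right)
  moreover have "c * (((norm (x - a))\<^sup>2 + (norm (x - b))\<^sup>2) / 2 - (norm (a - b))\<^sup>2 / 4)
      = (c * (norm (x - a))\<^sup>2 + c * (norm (x - b))\<^sup>2) / 2 - c * (norm (a - b))\<^sup>2 / 4"
    by (simp add: algebra_simps)
  ultimately show ?thesis
    unfolding F_def norm_midpoint_dist_sq by argo
qed

lemma prox_minimizes:
  fixes f :: "'a::{real_inner, complete_space} \<Rightarrow> real"
  assumes cont: "continuous_on UNIV f" and cv: "convex_on UNIV f" and lam: "lam > 0"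
  shows "f (prox lam f x) + (1 / (2 * lam)) * (norm (x - prox lam f x))\<^sup>2
           \<le> f v + (1 / (2 * lam)) * (norm (x - v))\<^sup>2"
proof -
  define c where "c = 1 / (2 * lam)"
  have c: "c > 0"
    using lam by (simp add: c_def)
  let ?F = "\<lambda>y. f y + c * (norm (x - y))\<^sup>2"
  have "\<exists>!y. \<forall>v. ?F y \<le> ?F v"
  proof (rule strongly_midpoint_convex_unique_minimizer[OF _ _ c])
    show "continuous_on UNIV ?F"
      using cont by (intro continuous_intros)
    show "bdd_below (range ?F)"
      by (rule convex_plus_sq_dist_bdd_below[OF cont cv c])
  qed (rule convex_plus_sq_dist_midpoint[OF cv])
  then have "\<forall>v. ?F (THE y. \<forall>v. ?F y \<le> ?F v) \<le> ?F v"
    by (rule theI')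
  then show ?thesis
    unfolding prox_def c_def by blast
qed

lemma prox_variational_ineq:
  fixes f :: "'a::{real_inner, complete_space} \<Rightarrow> real"
  assumes cont: "continuous_on UNIV f" and cv: "convex_on UNIV f" and lam: "lam > 0"
  shows "inner (x - prox lam f x) (q - prox lam f x) \<le> lam * (f q - f (prox lam f x))"
proof -
  define y where "y = prox lam f x"
  define c where "c = 1 / (2 * lam)"
  have c: "c > 0"
    using lam by (simp add: c_def)
  define D where "D = 2 * c * inner (x - y) (q - y) - (f q - f y)"
  define Q where "Q = c * (norm (q - y))\<^sup>2"
  have Q: "Q \<ge> 0"
    using c by (simp add: Q_def)
  have D_le: "D \<le> t * Q" if t: "0 < t" "t \<le> 1" for t
  proof -
    define p where "p = (1 - t) *\<^sub>R y + t *\<^sub>R q"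
    have xp: "x - p = (x - y) - t *\<^sub>R (q - y)"
      by (simp add: p_def algebra_simps)
    have "f p \<le> (1 - t) * f y + t * f q"
      unfolding p_def using convex_onD[OF cv, of t y q] t by simp
    moreover have np: "(norm (x - p))\<^sup>2 = (norm (x - y))\<^sup>2 - 2 * t * inner (x - y) (q - y) + t\<^sup>2 * (norm (q - y))\<^sup>2"
      unfolding xp using norm_diff_sq[of "x - y" "t *\<^sub>R (q - y)"] by (simp add: power_mult_distrib)
    moreover have "f y + c * (norm (x - y))\<^sup>2 \<le> f p + c * (norm (x - p))\<^sup>2"
      using prox_minimizes[OF cont cv lam] by (simp add: y_def c_def)
    ultimately have "f y + c * (norm (x - y))\<^sup>2 \<le> (1 - t) * f y + t * f q
        + c * ((norm (x - y))\<^sup>2 - 2 * t * inner (x - y) (q - y) + t\<^sup>2 * (norm (q - y))\<^sup>2)"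
      unfolding np by argo
    then have "t * D \<le> t * (t * Q)"
      by (simp add: D_def Q_def algebra_simps power2_eq_square)
    then show ?thesis
      using t by simp
  qed
  have "D \<le> 0"
  proof (rule field_le_epsilon)
    fix e :: real
    assume e: "e > 0"
    define t where "t = min 1 (e / (Q + 1))"
    have "t * Q \<le> e / (Q + 1) * Q"
      using Q by (intro mult_right_mono) (auto simp: t_def)
    also have "\<dots> \<le> e"
      using Q e by (simp add: field_simps)
    finally show "D \<le> 0 + e"
      using D_le[of t] e Q by (simp add: t_def)
  qed
  then show ?thesis
    using lam by (simp add: D_def c_def y_def field_simps)
qed

lemma variational_ineq_dist_le:
  fixes v y v' y' :: "'a::real_inner"
  assumes lam: "lam > 0" and mu: "mu > 0"
    and vi: "inner (v - y) (y' - y) \<le> lam * (F y' - F y)"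
    and vi': "inner (v' - y') (y - y') \<le> mu * (F y - F y')"
  shows "norm (y - y') \<le> norm (v - v') + \<bar>1 - lam / mu\<bar> * norm (v' - y')"
proof -
  define k where "k = lam / mu"
  have "k * inner (v' - y') (y - y') \<le> lam * (F y - F y')"
    using mult_left_mono[OF vi', of k] lam mu by (simp add: k_def)
  then have sum: "inner (v - y) (y' - y) + k * inner (v' - y') (y - y') \<le> 0"
    using vi by (simp add: algebra_simps)
  define E where "E = (v - v') + (1 - k) *\<^sub>R (v' - y')"
  have "(norm (y - y'))\<^sup>2 = inner E (y - y') + (inner (v - y) (y' - y) + k * inner (v' - y') (y - y'))"
    unfolding E_def power2_norm_eq_inner by (simp add: inner_simps algebra_simps)
  also have "\<dots> \<le> norm E * norm (y - y')"
    using sum norm_cauchy_schwarz[of E "y - y'"] by linarith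
  finally have "norm (y - y') \<le> norm E"
    by (cases "y = y'") (auto simp: power2_eq_square)
  also have "\<dots> \<le> norm (v - v') + \<bar>1 - k\<bar> * norm (v' - y')"
    unfolding E_def by (rule order_trans[OF norm_triangle_ineq]) simp
  finally show ?thesis
    by (simp add: k_def)
qed

section \<open>Real sequences\<close>

lemma finite_family_uniform_bound:
  fixes P :: "'i \<Rightarrow> 'n \<Rightarrow> real"
  assumes "finite I" and "\<And>i. i \<in> I \<Longrightarrow> \<exists>B. \<forall>n\<in>S. P i n \<le> B"
  obtains B where "\<And>i n. i \<in> I \<Longrightarrow> n \<in> S \<Longrightarrow> P i n \<le> B"
proof -
  obtain Bi where Bi: "\<forall>i\<in>I. \<forall>n\<in>S. P i n \<le> Bi i"
    using bchoice[of I "\<lambda>i B. \<forall>n\<in>S. P i n \<le> B"] assms(2) by blast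
  have "Bi i \<le> Max (insert 0 (Bi ` I))" if "i \<in> I" for i
    using assms(1) that by (intro Max_ge) auto
  then show ?thesis
    using Bi by (intro that[of "Max (insert 0 (Bi ` I))"]) (meson order_trans)
qed

lemma Bseq_contracting_recursion:
  fixes r q :: "nat \<Rightarrow> real"
  assumes rec: "\<forall>\<^sub>F n in sequentially. r (Suc n) \<le> G + q n * r n \<and> 0 \<le> q n \<and> q n \<le> 1/2"
    and nonneg: "\<And>n. 0 \<le> r n"
  shows "Bseq r"
proof -
  obtain N where N: "\<And>n. n \<ge> N \<Longrightarrow> r (Suc n) \<le> G + q n * r n \<and> 0 \<le> q n \<and> q n \<le> 1/2"
    using rec by (auto simp: eventually_sequentially)
  have "r n \<le> max (r N) (2 * G)" if "n \<ge> N" for n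
    using that
  proof (induction n rule: dec_induct)
    case (step n)
    have "q n * r n \<le> (1/2) * max (r N) (2 * G)"
      using N[OF step.hyps(1)] nonneg[of n] step.IH by (intro mult_mono) auto
    then have "r (Suc n) \<le> G + (1/2) * max (r N) (2 * G)"
      using N[OF step.hyps(1)] by linarith
    also have "\<dots> \<le> max (r N) (2 * G)"
      by (simp add: max_def)
    finally show ?case .
  qed simp
  then have "\<forall>\<^sub>F n in sequentially. norm (r n) \<le> norm (max (r N) (2 * G))"
    unfolding eventually_sequentially using nonneg by (metis abs_ge_self abs_of_nonneg order_trans real_norm_def)
  then show ?thesis
    by (rule Bseq_eventually_mono) simp
qed

lemma contraction_excess_le:
  fixes a \<alpha> :: "nat \<Rightarrow> real"
  assumes \<alpha>: "\<And>n. n \<ge> N \<Longrightarrow> 0 \<le> \<alpha> n \<and> \<alpha> n \<le> 1"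
    and rec: "\<And>n. n \<ge> N \<Longrightarrow> a (Suc n) \<le> (1 - \<alpha> n) * a n + \<alpha> n * e"
  shows "a (N + k) - e \<le> exp (- (\<Sum>j<k. \<alpha> (N + j))) * max (a N - e) 0"
proof (induction k)
  case (Suc k)
  let ?S = "\<Sum>j<k. \<alpha> (N + j)"
  have \<alpha>k: "0 \<le> \<alpha> (N + k)" "\<alpha> (N + k) \<le> 1"
    using \<alpha>[of "N + k"] by auto
  have "a (N + Suc k) - e \<le> (1 - \<alpha> (N + k)) * (a (N + k) - e)"
    using rec[of "N + k"] by (simp add: algebra_simps)
  also have "\<dots> \<le> (1 - \<alpha> (N + k)) * (exp (- ?S) * max (a N - e) 0)"
    using Suc \<alpha>k by (intro mult_left_mono) auto
  also have "\<dots> \<le> exp (- \<alpha> (N + k)) * (exp (- ?S) * max (a N - e) 0)"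
    using exp_ge_add_one_self[of "- \<alpha> (N + k)"] by (intro mult_right_mono) auto
  also have "\<dots> = exp (- (\<Sum>j<Suc k. \<alpha> (N + j))) * max (a N - e) 0"
    by (simp add: exp_add[symmetric])
  finally show ?case .
qed simp

lemma exp_neg_partial_sums_tendsto_zero:
  fixes \<alpha> :: "nat \<Rightarrow> real"
  assumes nonneg: "\<And>n. 0 \<le> \<alpha> n" and diverges: "\<not> summable \<alpha>"
  shows "(\<lambda>k. exp (- (\<Sum>j<k. \<alpha> j))) \<longlonglongrightarrow> 0"
proof -
  have "filterlim (\<lambda>k. \<Sum>j<k. \<alpha> j) at_top sequentially"
    unfolding filterlim_at_top
  proof
    fix B
    obtain k0 where k0: "B < (\<Sum>j<k0. \<alpha> j)"
      using summableI_nonneg_bounded[of \<alpha> B] nonneg diverges by (meson not_le)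
    have "B \<le> (\<Sum>j<k. \<alpha> j)" if "k \<ge> k0" for k
    proof -
      have "(\<Sum>j<k0. \<alpha> j) \<le> (\<Sum>j<k. \<alpha> j)"
        using that nonneg by (intro sum_mono2) auto
      then show ?thesis
        using k0 by linarith
    qed
    then show "\<forall>\<^sub>F k in sequentially. B \<le> (\<Sum>j<k. \<alpha> j)"
      unfolding eventually_sequentially by blast
  qed
  then have "filterlim (\<lambda>k. - (\<Sum>j<k. \<alpha> j)) at_bot sequentially"
    by (simp add: filterlim_uminus_at_bot)
  then show ?thesis
    by (rule filterlim_compose[OF exp_at_bot])
qed

lemma xu_tendsto_zero:
  fixes a b \<alpha> :: "nat \<Rightarrow> real"
  assumes nonneg: "\<And>n. 0 \<le> a n"
    and \<alpha>: "\<forall>\<^sub>F n in sequentially. 0 \<le> \<alpha> n \<and> \<alpha> n \<le> 1"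
    and diverges: "\<not> summable \<alpha>"
    and rec: "\<forall>\<^sub>F n in sequentially. a (Suc n) \<le> (1 - \<alpha> n) * a n + \<alpha> n * b n"
    and b: "b \<longlonglongrightarrow> 0"
  shows "a \<longlonglongrightarrow> 0"
proof (rule LIMSEQ_I)
  fix r :: real
  assume r: "r > 0"
  define e where "e = r / 3"
  have e: "e > 0"
    using r by (simp add: e_def)
  have "\<forall>\<^sub>F n in sequentially. (0 \<le> \<alpha> n \<and> \<alpha> n \<le> 1) \<and> a (Suc n) \<le> (1 - \<alpha> n) * a n + \<alpha> n * e"
    using \<alpha> rec order_tendstoD(2)[OF b e]
    by eventually_elim (smt (verit, best) mult_left_mono)
  then obtain N where N: "\<And>n. n \<ge> N \<Longrightarrow> (0 \<le> \<alpha> n \<and> \<alpha> n \<le> 1) \<and> a (Suc n) \<le> (1 - \<alpha> n) * a n + \<alpha> n * e"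
    by (auto simp: eventually_sequentially)
  have "\<not> summable (\<lambda>j. \<alpha> (N + j))"
    using diverges summable_iff_shift[of \<alpha> N] by (simp add: add.commute)
  then have "(\<lambda>k. exp (- (\<Sum>j<k. \<alpha> (N + j))) * max (a N - e) 0) \<longlonglongrightarrow> 0 * max (a N - e) 0"
    using N by (intro tendsto_mult tendsto_const exp_neg_partial_sums_tendsto_zero) auto
  then have "\<forall>\<^sub>F k in sequentially. exp (- (\<Sum>j<k. \<alpha> (N + j))) * max (a N - e) 0 < e"
    using e by (intro order_tendstoD(2)) simp_all
  then obtain k0 where k0: "\<And>k. k \<ge> k0 \<Longrightarrow> exp (- (\<Sum>j<k. \<alpha> (N + j))) * max (a N - e) 0 < e"
    by (auto simp: eventually_sequentially)
  have "a n < r" if "n \<ge> N + k0" for n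
  proof -
    define k where "k = n - N"
    have k: "n = N + k" "k \<ge> k0"
      using that by (auto simp: k_def)
    have "a (N + k) - e \<le> exp (- (\<Sum>j<k. \<alpha> (N + j))) * max (a N - e) 0"
      using N by (intro contraction_excess_le) auto
    then show ?thesis
      using k0[OF k(2)] e unfolding k(1) e_def by linarith
  qed
  then show "\<exists>no. \<forall>n\<ge>no. norm (a n - 0) < r"
    using nonneg by (intro exI[of _ "N + k0"]) auto
qed

section \<open>The algorithm\<close>

text \<open>
The index set {1..M} is generalised to a finite nonempty set I, averaged with weight
1 / card I, and p is a chosen common fixed point of the T i.
\<close>

locale accelerated_parallel_algorithm =
  fixes I :: "'i set"
    and f h :: "'i \<Rightarrow> 'a::{real_inner, complete_space} \<Rightarrow> real"
    and grad :: "'i \<Rightarrow> 'a \<Rightarrow> 'a"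
    and T :: "'i \<Rightarrow> 'a \<Rightarrow> 'a"
    and L :: "'i \<Rightarrow> real"
    and \<theta> lam \<beta> \<alpha> :: "nat \<Rightarrow> real"
    and x z :: "nat \<Rightarrow> 'a"
    and u :: "'i \<Rightarrow> 'a"
    and d y w :: "'i \<Rightarrow> nat \<Rightarrow> 'a"
    and p :: 'a
  assumes finite_I: "finite I" and I_nonempty: "I \<noteq> {}"
    and f_continuous: "\<And>i. i \<in> I \<Longrightarrow> continuous_on UNIV (f i)"
    and f_convex: "\<And>i. i \<in> I \<Longrightarrow> convex_on UNIV (f i)"
    and h_convex: "\<And>i. i \<in> I \<Longrightarrow> convex_on UNIV (h i)"
    and h_gradient: "\<And>i v. i \<in> I \<Longrightarrow> (h i has_derivative (\<lambda>t. inner (grad i v) t)) (at v)"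
    and L_pos: "\<And>i. i \<in> I \<Longrightarrow> L i > 0"
    and gradient_lipschitz: "\<And>i v v'. i \<in> I \<Longrightarrow> norm (grad i v - grad i v') \<le> (1 / L i) * norm (v - v')"
    and T_firmly_nonexpansive: "\<And>i. i \<in> I \<Longrightarrow> firmly_nonexpansive (T i)"
    and common_fixpoint: "\<And>i. i \<in> I \<Longrightarrow> T i p = p"
    and \<theta>_range: "\<And>n. n \<ge> 1 \<Longrightarrow> 0 \<le> \<theta> n \<and> \<theta> n < 1"
    and \<theta>_decreasing: "\<And>n. n \<ge> 1 \<Longrightarrow> \<theta> (Suc n) \<le> \<theta> n"
    and lam_pos: "\<And>n. n \<ge> 1 \<Longrightarrow> 0 < lam n"
    and lam_tendsto: "lam \<longlonglongrightarrow> 0"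
    and \<beta>_range: "\<And>n. n \<ge> 1 \<Longrightarrow> 0 < \<beta> n \<and> \<beta> n \<le> 1"
    and \<beta>_decreasing: "\<And>n. n \<ge> 1 \<Longrightarrow> \<beta> (Suc n) \<le> \<beta> n"
    and \<beta>_tendsto: "\<beta> \<longlonglongrightarrow> 0"
    and \<alpha>_range: "\<And>n. n \<ge> 1 \<Longrightarrow> 0 < \<alpha> n \<and> \<alpha> n \<le> 1"
    and \<alpha>_tendsto: "\<alpha> \<longlonglongrightarrow> 0"
    and \<alpha>_not_summable: "\<not> summable \<alpha>"
    and C2: "(\<lambda>n. (1 / \<alpha> (Suc n)) * \<bar>1 / lam (Suc n) - 1 / lam n\<bar>) \<longlonglongrightarrow> 0"
    and C3: "(\<lambda>n. (1 / lam (Suc n)) * \<bar>1 - \<alpha> n / \<alpha> (Suc n)\<bar>) \<longlonglongrightarrow> 0"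
    and C5: "(\<lambda>n. \<theta> n / (\<alpha> (Suc n) * lam (Suc n))) \<longlonglongrightarrow> 0"
    and C7: "(\<lambda>n. \<beta> n / \<alpha> (Suc n)) \<longlonglongrightarrow> 0"
    and z_eq: "\<And>n. n \<ge> 1 \<Longrightarrow> z n = x n + \<theta> n *\<^sub>R (x n - x (n - 1))"
    and d_eq: "\<And>i n. i \<in> I \<Longrightarrow> n \<ge> 1 \<Longrightarrow> d i (Suc n) = - grad i (z n) + \<beta> n *\<^sub>R d i n"
    and y_eq: "\<And>i n. i \<in> I \<Longrightarrow> n \<ge> 1 \<Longrightarrow> y i n = prox (lam n) (f i) (z n + lam n *\<^sub>R d i (Suc n))"
    and w_eq: "\<And>i n. i \<in> I \<Longrightarrow> n \<ge> 1 \<Longrightarrow> w i n = \<alpha> n *\<^sub>R u i + (1 - \<alpha> n) *\<^sub>R T i (y i n)"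
    and x_eq: "\<And>n. n \<ge> 1 \<Longrightarrow> x (Suc n) = (1 / real (card I)) *\<^sub>R (\<Sum>i\<in>I. w i n)"
    and y_bounded: "\<And>i. i \<in> I \<Longrightarrow> bounded ((\<lambda>n. y i n) ` {1..})"
begin

definition prox_arg :: "'i \<Rightarrow> nat \<Rightarrow> 'a" where
  "prox_arg i n = z n + lam n *\<^sub>R d i (Suc n)"

lemma T_nonexpansive: "i \<in> I \<Longrightarrow> norm (T i a - T i b) \<le> norm (a - b)"
  by (rule firmly_nonexpansive_imp_nonexpansive[OF T_firmly_nonexpansive])

lemma y_variational_ineq:
  assumes "i \<in> I" "n \<ge> 1"
  shows "inner (prox_arg i n - y i n) (q - y i n) \<le> lam n * (f i q - f i (y i n))"
  unfolding y_eq[OF assms] prox_arg_def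
  using assms by (intro prox_variational_ineq f_continuous f_convex lam_pos)

lemma y_bound:
  obtains Y where "\<And>i n. i \<in> I \<Longrightarrow> n \<ge> 1 \<Longrightarrow> norm (y i n) \<le> Y"
proof -
  have "\<exists>B. \<forall>n\<in>{1..}. norm (y i n) \<le> B" if "i \<in> I" for i
    using y_bounded[OF that] by (simp add: bounded_iff)
  then obtain Y where "\<And>i n. i \<in> I \<Longrightarrow> n \<in> {1..} \<Longrightarrow> norm (y i n) \<le> Y"
    using finite_family_uniform_bound[where P = "\<lambda>i n. norm (y i n)", OF finite_I] by blast
  then show ?thesis
    by (intro that[of Y]) simp
qed

lemma u_Ty_bound:
  obtains K where "\<And>i. i \<in> I \<Longrightarrow> norm (u i) \<le> K"
    and "\<And>i n. i \<in> I \<Longrightarrow> n \<ge> 1 \<Longrightarrow> norm (T i (y i n)) \<le> K"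
proof -
  obtain Y where Y: "\<And>i n. i \<in> I \<Longrightarrow> n \<ge> 1 \<Longrightarrow> norm (y i n) \<le> Y"
    using y_bound by blast
  define K where "K = max (Y + 2 * norm p) (\<Sum>i\<in>I. norm (u i))"
  show ?thesis
  proof (rule that)
    show "norm (u i) \<le> K" if "i \<in> I" for i
      using member_le_sum[of i I "\<lambda>i. norm (u i)"] finite_I that by (simp add: K_def)
    show "norm (T i (y i n)) \<le> K" if "i \<in> I" "n \<ge> 1" for i n
    proof -
      have "norm (T i (y i n)) \<le> norm (T i (y i n) - T i p) + norm p"
        using common_fixpoint[OF that(1)] norm_triangle_sub[of "T i (y i n)" p] by simp
      also have "\<dots> \<le> norm (y i n) + norm p + norm p"
        using T_nonexpansive[OF that(1), of "y i n" p] norm_triangle_ineq4[of "y i n" p] by simp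
      finally show ?thesis
        using Y[OF that] by (simp add: K_def)
    qed
  qed
qed

lemma norm_w_le:
  assumes "i \<in> I" "n \<ge> 1" and "norm (u i) \<le> K" "norm (T i (y i n)) \<le> K"
  shows "norm (w i n) \<le> K"
proof -
  have \<alpha>: "0 \<le> \<alpha> n" "\<alpha> n \<le> 1"
    using \<alpha>_range[OF assms(2)] by auto
  have "norm (w i n) \<le> \<alpha> n * norm (u i) + (1 - \<alpha> n) * norm (T i (y i n))"
    using w_eq[OF assms(1,2)] \<alpha> norm_triangle_ineq[of "\<alpha> n *\<^sub>R u i" "(1 - \<alpha> n) *\<^sub>R T i (y i n)"] by simp
  also have "\<dots> \<le> \<alpha> n * K + (1 - \<alpha> n) * K"
    using \<alpha> assms(3,4) by (intro add_mono mult_left_mono) auto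
  finally show ?thesis
    by (simp add: algebra_simps)
qed

lemma x_bound:
  obtains X where "\<And>n. norm (x n) \<le> X"
proof -
  obtain K where u: "\<And>i. i \<in> I \<Longrightarrow> norm (u i) \<le> K"
    and Ty: "\<And>i n. i \<in> I \<Longrightarrow> n \<ge> 1 \<Longrightarrow> norm (T i (y i n)) \<le> K"
    using u_Ty_bound by blast
  have "norm (x n) \<le> max K (max (norm (x 0)) (norm (x 1)))" for n
  proof (cases "n \<le> 1")
    case True
    then show ?thesis
      by (auto simp: le_Suc_eq)
  next
    case False
    then obtain m where m: "n = Suc m" "m \<ge> 1"
      by (cases n) auto
    have "norm (x n) \<le> K"
      unfolding m x_eq[OF m(2)] using m(2) u Ty
      by (intro norm_average_le finite_I I_nonempty norm_w_le) auto
    then show ?thesis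
      by simp
  qed
  then show ?thesis
    by (rule that)
qed

lemma norm_z_minus_x_le:
  assumes "n \<ge> 1"
  shows "norm (z n - x n) \<le> norm (x n - x (n - 1))"
proof -
  have "norm (z n - x n) = \<theta> n * norm (x n - x (n - 1))"
    using z_eq[OF assms] \<theta>_range[OF assms] by simp
  then show ?thesis
    using \<theta>_range[OF assms] by (simp add: mult_left_le_one_le)
qed

lemma norm_z_le:
  assumes X: "\<And>n. norm (x n) \<le> X" and "n \<ge> 1"
  shows "norm (z n) \<le> 3 * X"
  using norm_z_minus_x_le[OF assms(2)] norm_triangle_ineq4[of "x n" "x (n - 1)"]
    norm_triangle_ineq2[of "z n" "x n"] X[of n] X[of "n - 1"] by linarith

lemma grad_bound:
  obtains G where "\<And>i n. i \<in> I \<Longrightarrow> n \<ge> 1 \<Longrightarrow> norm (grad i (z n)) \<le> G"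
proof -
  obtain X where X: "\<And>n. norm (x n) \<le> X"
    using x_bound by blast
  have "\<exists>B. \<forall>n\<in>{1..}. norm (grad i (z n)) \<le> B" if i: "i \<in> I" for i
  proof -
    have "norm (grad i (z n)) \<le> norm (grad i 0) + (1 / L i) * (3 * X)" if "n \<ge> 1" for n
    proof -
      have "norm (grad i (z n) - grad i 0) \<le> (1 / L i) * norm (z n)"
        using gradient_lipschitz[OF i, of "z n" 0] by simp
      also have "\<dots> \<le> (1 / L i) * (3 * X)"
        using norm_z_le[OF X that] L_pos[OF i] by (intro mult_left_mono) auto
      finally show ?thesis
        using norm_triangle_ineq2[of "grad i (z n)" "grad i 0"] by linarith
    qed
    then show ?thesis
      by auto
  qed
  then obtain G where "\<And>i n. i \<in> I \<Longrightarrow> n \<in> {1..} \<Longrightarrow> norm (grad i (z n)) \<le> G"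
    using finite_family_uniform_bound[where P = "\<lambda>i n. norm (grad i (z n))", OF finite_I] by blast
  then show ?thesis
    by (intro that[of G]) simp
qed

lemma d_bound:
  obtains D where "\<And>i n. i \<in> I \<Longrightarrow> norm (d i n) \<le> D"
proof -
  obtain G where G: "\<And>i n. i \<in> I \<Longrightarrow> n \<ge> 1 \<Longrightarrow> norm (grad i (z n)) \<le> G"
    using grad_bound by blast
  have "\<exists>B. \<forall>n\<in>UNIV. norm (d i n) \<le> B" if i: "i \<in> I" for i
  proof -
    \<comment> \<open>Once \<beta> n \<le> 1/2, the recursion for d contracts.\<close>
    have "\<forall>\<^sub>F n in sequentially. \<beta> n < 1/2"
      using \<beta>_tendsto by (rule order_tendstoD) simp
    then have "\<forall>\<^sub>F n in sequentially. 1 \<le> n \<and> \<beta> n < 1/2"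
      using eventually_ge_at_top[of 1] by eventually_elim simp
    then have "\<forall>\<^sub>F n in sequentially. norm (d i (Suc n)) \<le> G + \<beta> n * norm (d i n) \<and> 0 \<le> \<beta> n \<and> \<beta> n \<le> 1/2"
    proof eventually_elim
      case (elim n)
      have "norm (d i (Suc n)) \<le> norm (grad i (z n)) + \<beta> n * norm (d i n)"
        using d_eq[OF i] \<beta>_range[of n] elim norm_triangle_ineq[of "- grad i (z n)" "\<beta> n *\<^sub>R d i n"] by simp
      then show ?case
        using G[OF i] \<beta>_range[of n] elim by fastforce
    qed
    then have "Bseq (\<lambda>n. norm (d i n))"
      by (rule Bseq_contracting_recursion) simp
    then show ?thesis
      by (auto simp: Bseq_def)
  qed
  then obtain D where "\<And>i n. i \<in> I \<Longrightarrow> n \<in> UNIV \<Longrightarrow> norm (d i n) \<le> D"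
    using finite_family_uniform_bound[where P = "\<lambda>i n. norm (d i n)", OF finite_I] by blast
  then show ?thesis
    by (intro that[of D]) simp
qed

lemma prox_arg_bound:
  obtains V where "\<And>i n. i \<in> I \<Longrightarrow> n \<ge> 1 \<Longrightarrow> norm (prox_arg i n - y i n) \<le> V"
proof -
  obtain X where X: "\<And>n. norm (x n) \<le> X"
    using x_bound by blast
  obtain D where D: "\<And>i n. i \<in> I \<Longrightarrow> norm (d i n) \<le> D"
    using d_bound by blast
  obtain Y where Y: "\<And>i n. i \<in> I \<Longrightarrow> n \<ge> 1 \<Longrightarrow> norm (y i n) \<le> Y"
    using y_bound by blast
  obtain \<Lambda> where "\<Lambda> > 0" and \<Lambda>: "\<And>n. norm (lam n) \<le> \<Lambda>"
    using convergent_imp_Bseq[OF convergentI[OF lam_tendsto]] by (auto simp: Bseq_def)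
  have "norm (prox_arg i n - y i n) \<le> 3 * X + \<Lambda> * D + Y" if i: "i \<in> I" and n: "n \<ge> 1" for i n
  proof -
    have "norm (prox_arg i n - y i n) \<le> norm (z n) + lam n * norm (d i (Suc n)) + norm (y i n)"
      unfolding prox_arg_def using lam_pos[OF n]
      by (smt (verit) norm_scaleR norm_triangle_ineq norm_triangle_ineq4 abs_of_pos)
    moreover have "lam n * norm (d i (Suc n)) \<le> \<Lambda> * D"
      using \<Lambda>[of n] D[OF i, of "Suc n"] lam_pos[OF n] \<open>\<Lambda> > 0\<close> by (intro mult_mono) auto
    ultimately show ?thesis
      using norm_z_le[OF X n] Y[OF i n] by linarith
  qed
  then show ?thesis
    by (rule that)
qed

lemma eventually_lam_le_L: "\<forall>\<^sub>F n in sequentially. \<forall>i\<in>I. lam n \<le> L i"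
proof (rule eventually_ball_finite[OF finite_I], intro ballI)
  fix i
  assume "i \<in> I"
  then have "\<forall>\<^sub>F n in sequentially. lam n < L i"
    using lam_tendsto L_pos by (intro order_tendstoD(2)) auto
  then show "\<forall>\<^sub>F n in sequentially. lam n \<le> L i"
    by eventually_elim simp
qed

lemma z_step_le:
  assumes X: "\<And>n. norm (x n) \<le> X" and m: "m \<ge> 1"
  shows "norm (z (Suc m) - z m) \<le> norm (x (Suc m) - x m) + 4 * X * \<theta> m"
proof -
  have \<theta>: "0 \<le> \<theta> (Suc m)" "\<theta> (Suc m) \<le> \<theta> m" "0 \<le> \<theta> m"
    using \<theta>_range[of "Suc m"] \<theta>_range[OF m] \<theta>_decreasing[OF m] by auto
  have diff: "norm (x k - x l) \<le> 2 * X" for k l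
    using norm_triangle_ineq4[of "x k" "x l"] X[of k] X[of l] by linarith
  have "z (Suc m) - z m = (x (Suc m) - x m) + \<theta> (Suc m) *\<^sub>R (x (Suc m) - x m) - \<theta> m *\<^sub>R (x m - x (m - 1))"
    using z_eq[of "Suc m"] z_eq[OF m] by (simp add: algebra_simps)
  then have "norm (z (Suc m) - z m)
      \<le> norm (x (Suc m) - x m) + \<theta> (Suc m) * norm (x (Suc m) - x m) + \<theta> m * norm (x m - x (m - 1))"
    using \<theta> by (smt (verit) norm_scaleR norm_triangle_ineq norm_triangle_ineq4 abs_of_nonneg)
  moreover have "\<theta> (Suc m) * norm (x (Suc m) - x m) \<le> \<theta> m * (2 * X)"
    using \<theta> diff by (intro mult_mono) auto
  moreover have "\<theta> m * norm (x m - x (m - 1)) \<le> \<theta> m * (2 * X)"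
    using \<theta> diff by (intro mult_left_mono) auto
  moreover have "\<theta> m * (2 * X) + \<theta> m * (2 * X) = 4 * X * \<theta> m"
    by simp
  ultimately show ?thesis
    by linarith
qed

lemma prox_arg_step_le:
  assumes i: "i \<in> I" and m: "m \<ge> 1" and lam_L: "lam (Suc m) \<le> L i"
    and D: "\<And>n. norm (d i n) \<le> D" and G: "norm (grad i (z m)) \<le> G"
  shows "norm (prox_arg i (Suc m) - prox_arg i m)
    \<le> norm (z (Suc m) - z m) + (lam (Suc m) + lam m) * \<beta> m * D + \<bar>lam (Suc m) - lam m\<bar> * G"
proof -
  have lam: "0 < lam (Suc m)" "0 < lam m"
    using lam_pos[of "Suc m"] lam_pos[OF m] by auto
  have \<beta>: "0 \<le> \<beta> (Suc m)" "\<beta> (Suc m) \<le> \<beta> m"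
    using \<beta>_range[of "Suc m"] \<beta>_decreasing[OF m] by auto
  define A where "A = (z (Suc m) - lam (Suc m) *\<^sub>R grad i (z (Suc m))) - (z m - lam (Suc m) *\<^sub>R grad i (z m))"
  \<comment> \<open>Split into a forward gradient step, which is nonexpansive, and perturbations.\<close>
  have "prox_arg i (Suc m) - prox_arg i m = A + (lam (Suc m) * \<beta> (Suc m)) *\<^sub>R d i (Suc m)
      - (lam (Suc m) - lam m) *\<^sub>R grad i (z m) - (lam m * \<beta> m) *\<^sub>R d i m"
    unfolding prox_arg_def A_def d_eq[OF i m] d_eq[OF i, of "Suc m", simplified] by (simp add: algebra_simps)
  then have "norm (prox_arg i (Suc m) - prox_arg i m) \<le> norm A + lam (Suc m) * \<beta> (Suc m) * norm (d i (Suc m))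
      + \<bar>lam (Suc m) - lam m\<bar> * norm (grad i (z m)) + lam m * \<beta> m * norm (d i m)"
    using lam \<beta> \<beta>_range[OF m] by (smt (verit) norm_scaleR norm_triangle_ineq norm_triangle_ineq4 abs_of_nonneg mult_nonneg_nonneg)
  moreover have "norm A \<le> norm (z (Suc m) - z m)"
    unfolding A_def using lam lam_L
    by (intro forward_step_nonexpansive[OF h_convex[OF i] h_gradient[OF i] gradient_lipschitz[OF i] L_pos[OF i]]) auto
  moreover have "lam (Suc m) * \<beta> (Suc m) * norm (d i (Suc m)) \<le> lam (Suc m) * \<beta> m * D"
    using lam \<beta> D[of "Suc m"] by (intro mult_mono) (auto intro: mult_left_mono)
  moreover have "lam m * \<beta> m * norm (d i m) \<le> lam m * \<beta> m * D"
    using lam \<beta>_range[OF m] D[of m] by (intro mult_left_mono) auto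
  moreover have "\<bar>lam (Suc m) - lam m\<bar> * norm (grad i (z m)) \<le> \<bar>lam (Suc m) - lam m\<bar> * G"
    using G by (intro mult_left_mono) auto
  ultimately show ?thesis
    by (simp add: algebra_simps)
qed

lemma y_step_le:
  assumes i: "i \<in> I" and m: "m \<ge> 1"
  shows "norm (y i (Suc m) - y i m)
    \<le> norm (prox_arg i (Suc m) - prox_arg i m) + \<bar>1 - lam (Suc m) / lam m\<bar> * norm (prox_arg i m - y i m)"
  using lam_pos[of "Suc m"] lam_pos[OF m] y_variational_ineq[of i "Suc m"] y_variational_ineq[OF i m] i
  by (intro variational_ineq_dist_le) auto

lemma w_step_le:
  assumes i: "i \<in> I" and m: "m \<ge> 1" and K: "norm (u i) \<le> K" "norm (T i (y i m)) \<le> K"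
  shows "norm (w i (Suc m) - w i m)
    \<le> \<bar>\<alpha> (Suc m) - \<alpha> m\<bar> * (2 * K) + (1 - \<alpha> (Suc m)) * norm (y i (Suc m) - y i m)"
proof -
  have \<alpha>: "0 < \<alpha> (Suc m)" "\<alpha> (Suc m) \<le> 1"
    using \<alpha>_range[of "Suc m"] by auto
  have "w i (Suc m) - w i m = (\<alpha> (Suc m) - \<alpha> m) *\<^sub>R u i
      + (1 - \<alpha> (Suc m)) *\<^sub>R (T i (y i (Suc m)) - T i (y i m)) - (\<alpha> (Suc m) - \<alpha> m) *\<^sub>R T i (y i m)"
    using w_eq[OF i, of "Suc m"] w_eq[OF i m] by (simp add: algebra_simps)
  then have "norm (w i (Suc m) - w i m) \<le> \<bar>\<alpha> (Suc m) - \<alpha> m\<bar> * norm (u i)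
      + (1 - \<alpha> (Suc m)) * norm (T i (y i (Suc m)) - T i (y i m)) + \<bar>\<alpha> (Suc m) - \<alpha> m\<bar> * norm (T i (y i m))"
    using \<alpha> by (smt (verit) norm_scaleR norm_triangle_ineq norm_triangle_ineq4 abs_of_nonneg)
  moreover have "(1 - \<alpha> (Suc m)) * norm (T i (y i (Suc m)) - T i (y i m)) \<le> (1 - \<alpha> (Suc m)) * norm (y i (Suc m) - y i m)"
    using \<alpha> T_nonexpansive[OF i] by (intro mult_left_mono) auto
  moreover have "\<bar>\<alpha> (Suc m) - \<alpha> m\<bar> * norm (u i) + \<bar>\<alpha> (Suc m) - \<alpha> m\<bar> * norm (T i (y i m)) \<le> \<bar>\<alpha> (Suc m) - \<alpha> m\<bar> * (2 * K)"
    using K by (simp add: mult_left_mono flip: distrib_left)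
  ultimately show ?thesis
    by linarith
qed

lemma parameter_ratios_tendsto_zero:
  shows "(\<lambda>m. \<bar>\<alpha> (Suc m) - \<alpha> m\<bar> / \<alpha> (Suc m)) \<longlonglongrightarrow> 0"
    and "(\<lambda>m. \<theta> m / \<alpha> (Suc m)) \<longlonglongrightarrow> 0"
    and "(\<lambda>m. (lam (Suc m) + lam m) * \<beta> m / \<alpha> (Suc m)) \<longlonglongrightarrow> 0"
    and "(\<lambda>m. \<bar>lam (Suc m) - lam m\<bar> / \<alpha> (Suc m)) \<longlonglongrightarrow> 0"
    and "(\<lambda>m. \<bar>1 - lam (Suc m) / lam m\<bar> / \<alpha> (Suc m)) \<longlonglongrightarrow> 0"
proof -
  have lam': "(\<lambda>m. lam (Suc m)) \<longlonglongrightarrow> 0"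
    using LIMSEQ_Suc[OF lam_tendsto] .
  have pos: "\<forall>\<^sub>F m in sequentially. 0 < \<alpha> (Suc m) \<and> 0 < lam (Suc m) \<and> 0 < lam m"
    using eventually_ge_at_top[of 1] by eventually_elim (simp add: \<alpha>_range lam_pos)
  have "(\<lambda>m. lam (Suc m) * ((1 / lam (Suc m)) * \<bar>1 - \<alpha> m / \<alpha> (Suc m)\<bar>)) \<longlonglongrightarrow> 0 * 0"
    by (intro tendsto_mult lam' C3)
  moreover have "\<forall>\<^sub>F m in sequentially.
      lam (Suc m) * ((1 / lam (Suc m)) * \<bar>1 - \<alpha> m / \<alpha> (Suc m)\<bar>) = \<bar>\<alpha> (Suc m) - \<alpha> m\<bar> / \<alpha> (Suc m)"
    using pos
  proof eventually_elim
    case (elim m)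
    then have "1 - \<alpha> m / \<alpha> (Suc m) = (\<alpha> (Suc m) - \<alpha> m) / \<alpha> (Suc m)"
      by (simp add: field_simps)
    with elim show ?case
      by (simp add: abs_divide)
  qed
  ultimately show "(\<lambda>m. \<bar>\<alpha> (Suc m) - \<alpha> m\<bar> / \<alpha> (Suc m)) \<longlonglongrightarrow> 0"
    using Lim_transform_eventually by fastforce
  have "(\<lambda>m. lam (Suc m) * (\<theta> m / (\<alpha> (Suc m) * lam (Suc m)))) \<longlonglongrightarrow> 0 * 0"
    by (intro tendsto_mult lam' C5)
  moreover have "\<forall>\<^sub>F m in sequentially. lam (Suc m) * (\<theta> m / (\<alpha> (Suc m) * lam (Suc m))) = \<theta> m / \<alpha> (Suc m)"
    using pos by eventually_elim simp
  ultimately show "(\<lambda>m. \<theta> m / \<alpha> (Suc m)) \<longlonglongrightarrow> 0"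
    using Lim_transform_eventually by fastforce
  have "(\<lambda>m. (lam (Suc m) + lam m) * (\<beta> m / \<alpha> (Suc m))) \<longlonglongrightarrow> (0 + 0) * 0"
    by (intro tendsto_mult tendsto_add lam' lam_tendsto C7)
  then show "(\<lambda>m. (lam (Suc m) + lam m) * \<beta> m / \<alpha> (Suc m)) \<longlonglongrightarrow> 0"
    by simp
  have "(\<lambda>m. lam (Suc m) * lam m * ((1 / \<alpha> (Suc m)) * \<bar>1 / lam (Suc m) - 1 / lam m\<bar>)) \<longlonglongrightarrow> 0 * 0 * 0"
    by (intro tendsto_mult lam' lam_tendsto C2)
  moreover have "\<forall>\<^sub>F m in sequentially. lam (Suc m) * lam m * ((1 / \<alpha> (Suc m)) * \<bar>1 / lam (Suc m) - 1 / lam m\<bar>)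
      = \<bar>lam (Suc m) - lam m\<bar> / \<alpha> (Suc m)"
    using pos by eventually_elim (simp add: abs_divide abs_minus_commute field_simps)
  ultimately show "(\<lambda>m. \<bar>lam (Suc m) - lam m\<bar> / \<alpha> (Suc m)) \<longlonglongrightarrow> 0"
    using Lim_transform_eventually by fastforce
  have "(\<lambda>m. lam (Suc m) * ((1 / \<alpha> (Suc m)) * \<bar>1 / lam (Suc m) - 1 / lam m\<bar>)) \<longlonglongrightarrow> 0 * 0"
    by (intro tendsto_mult lam' C2)
  moreover have "\<forall>\<^sub>F m in sequentially. lam (Suc m) * ((1 / \<alpha> (Suc m)) * \<bar>1 / lam (Suc m) - 1 / lam m\<bar>)
      = \<bar>1 - lam (Suc m) / lam m\<bar> / \<alpha> (Suc m)"
    using pos by eventually_elim (simp add: abs_divide field_simps)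
  ultimately show "(\<lambda>m. \<bar>1 - lam (Suc m) / lam m\<bar> / \<alpha> (Suc m)) \<longlonglongrightarrow> 0"
    using Lim_transform_eventually by fastforce
qed

lemma x_step_le:
  assumes m: "m \<ge> 1" and lam_L: "\<forall>i\<in>I. lam (Suc m) \<le> L i"
    and u: "\<And>i. i \<in> I \<Longrightarrow> norm (u i) \<le> K" and Ty: "\<And>i. i \<in> I \<Longrightarrow> norm (T i (y i m)) \<le> K"
    and X: "\<And>n. norm (x n) \<le> X" and G: "\<And>i. i \<in> I \<Longrightarrow> norm (grad i (z m)) \<le> G"
    and D: "\<And>i n. i \<in> I \<Longrightarrow> norm (d i n) \<le> D" and V: "\<And>i. i \<in> I \<Longrightarrow> norm (prox_arg i m - y i m) \<le> V"
  defines "S \<equiv> 4 * X * \<theta> m + (lam (Suc m) + lam m) * \<beta> m * D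
      + \<bar>lam (Suc m) - lam m\<bar> * G + \<bar>1 - lam (Suc m) / lam m\<bar> * V"
  shows "norm (x (Suc (Suc m)) - x (Suc m))
    \<le> (1 - \<alpha> (Suc m)) * norm (x (Suc m) - x m) + (\<bar>\<alpha> (Suc m) - \<alpha> m\<bar> * (2 * K) + S)"
proof -
  have \<alpha>: "0 < \<alpha> (Suc m)" "\<alpha> (Suc m) \<le> 1"
    using \<alpha>_range[of "Suc m"] by auto
  obtain i0 where i0: "i0 \<in> I"
    using I_nonempty by blast
  have "0 \<le> X" "0 \<le> D" "0 \<le> G" "0 \<le> V"
    using X[of 0] D[OF i0, of 0] G[OF i0] V[OF i0] by (auto intro: order_trans[OF norm_ge_zero])
  then have S: "0 \<le> S"
    unfolding S_def using \<theta>_range[OF m] \<beta>_range[OF m] lam_pos[OF m] lam_pos[of "Suc m"]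
    by (intro add_nonneg_nonneg mult_nonneg_nonneg) auto
  have "norm (w i (Suc m) - w i m) \<le> (1 - \<alpha> (Suc m)) * norm (x (Suc m) - x m) + (\<bar>\<alpha> (Suc m) - \<alpha> m\<bar> * (2 * K) + S)"
    if i: "i \<in> I" for i
  proof -
    have "norm (y i (Suc m) - y i m) \<le> norm (x (Suc m) - x m) + S"
      using y_step_le[OF i m] V[OF i] z_step_le[OF X m] prox_arg_step_le[OF i m _ D[OF i] G[OF i]] lam_L i
        mult_left_mono[of "norm (prox_arg i m - y i m)" V "\<bar>1 - lam (Suc m) / lam m\<bar>"]
      unfolding S_def by fastforce
    then have "(1 - \<alpha> (Suc m)) * norm (y i (Suc m) - y i m) \<le> (1 - \<alpha> (Suc m)) * norm (x (Suc m) - x m) + S"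
      using \<alpha> S mult_left_mono[of _ _ "1 - \<alpha> (Suc m)"] mult_left_le_one_le[of S "1 - \<alpha> (Suc m)"]
      by (smt (verit) distrib_left)
    then show ?thesis
      using w_step_le[OF i m u[OF i] Ty[OF i]] by linarith
  qed
  then have "norm ((1 / real (card I)) *\<^sub>R (\<Sum>i\<in>I. w i (Suc m) - w i m))
      \<le> (1 - \<alpha> (Suc m)) * norm (x (Suc m) - x m) + (\<bar>\<alpha> (Suc m) - \<alpha> m\<bar> * (2 * K) + S)"
    by (intro norm_average_le finite_I I_nonempty)
  moreover have "x (Suc (Suc m)) - x (Suc m) = (1 / real (card I)) *\<^sub>R (\<Sum>i\<in>I. w i (Suc m) - w i m)"
    using x_eq[of "Suc m"] x_eq[OF m] by (simp add: sum_subtractf scaleR_diff_right)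
  ultimately show ?thesis
    by simp
qed

lemma x_step_recursion:
  obtains b where "b \<longlonglongrightarrow> 0"
    and "\<forall>\<^sub>F m in sequentially. norm (x (Suc (Suc m)) - x (Suc m))
           \<le> (1 - \<alpha> (Suc m)) * norm (x (Suc m) - x m) + \<alpha> (Suc m) * b m"
proof -
  obtain K where u: "\<And>i. i \<in> I \<Longrightarrow> norm (u i) \<le> K"
    and Ty: "\<And>i n. i \<in> I \<Longrightarrow> n \<ge> 1 \<Longrightarrow> norm (T i (y i n)) \<le> K"
    using u_Ty_bound by blast
  obtain X where X: "\<And>n. norm (x n) \<le> X"
    using x_bound by blast
  obtain G where G: "\<And>i n. i \<in> I \<Longrightarrow> n \<ge> 1 \<Longrightarrow> norm (grad i (z n)) \<le> G"
    using grad_bound by blast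
  obtain D where D: "\<And>i n. i \<in> I \<Longrightarrow> norm (d i n) \<le> D"
    using d_bound by blast
  obtain V where V: "\<And>i n. i \<in> I \<Longrightarrow> n \<ge> 1 \<Longrightarrow> norm (prox_arg i n - y i n) \<le> V"
    using prox_arg_bound by blast
  define b where "b m = 2 * K * (\<bar>\<alpha> (Suc m) - \<alpha> m\<bar> / \<alpha> (Suc m)) + 4 * X * (\<theta> m / \<alpha> (Suc m))
      + D * ((lam (Suc m) + lam m) * \<beta> m / \<alpha> (Suc m)) + G * (\<bar>lam (Suc m) - lam m\<bar> / \<alpha> (Suc m))
      + V * (\<bar>1 - lam (Suc m) / lam m\<bar> / \<alpha> (Suc m))" for m
  have "b \<longlonglongrightarrow> 2 * K * 0 + 4 * X * 0 + D * 0 + G * 0 + V * 0"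
    unfolding b_def by (intro tendsto_intros parameter_ratios_tendsto_zero)
  moreover have "\<forall>\<^sub>F m in sequentially. norm (x (Suc (Suc m)) - x (Suc m))
      \<le> (1 - \<alpha> (Suc m)) * norm (x (Suc m) - x m) + \<alpha> (Suc m) * b m"
    using eventually_ge_at_top[of 1] iffD2[OF eventually_sequentially_Suc eventually_lam_le_L]
  proof eventually_elim
    case (elim m)
    have "\<alpha> (Suc m) > 0"
      using \<alpha>_range[of "Suc m"] by simp
    then have "\<alpha> (Suc m) * b m = \<bar>\<alpha> (Suc m) - \<alpha> m\<bar> * (2 * K) + (4 * X * \<theta> m + (lam (Suc m) + lam m) * \<beta> m * D
        + \<bar>lam (Suc m) - lam m\<bar> * G + \<bar>1 - lam (Suc m) / lam m\<bar> * V)"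
      by (simp add: b_def field_simps)
    then show ?case
      using x_step_le[OF elim u Ty[OF _ elim(1)] X G[OF _ elim(1)] D V[OF _ elim(1)]] by simp
  qed
  ultimately show ?thesis
    using that by simp
qed

lemma x_asymptotically_regular: "(\<lambda>n. norm (x (Suc n) - x n)) \<longlonglongrightarrow> 0"
proof -
  obtain b where b: "b \<longlonglongrightarrow> 0"
    and rec: "\<forall>\<^sub>F m in sequentially. norm (x (Suc (Suc m)) - x (Suc m))
                \<le> (1 - \<alpha> (Suc m)) * norm (x (Suc m) - x m) + \<alpha> (Suc m) * b m"
    using x_step_recursion by blast
  show ?thesis
  proof (rule xu_tendsto_zero[OF _ _ _ rec b])
    show "\<forall>\<^sub>F m in sequentially. 0 \<le> \<alpha> (Suc m) \<and> \<alpha> (Suc m) \<le> 1"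
      using \<alpha>_range by (simp add: less_imp_le)
    show "\<not> summable (\<lambda>m. \<alpha> (Suc m))"
      using \<alpha>_not_summable by (simp add: summable_Suc_iff)
  qed simp
qed

lemma y_dist_fixpoint_le:
  assumes j: "j \<in> I" and n: "n \<ge> 1"
    and F: "f j p - f j (y j n) \<le> F" and D: "norm (d j (Suc n)) \<le> D" and R: "norm (y j n - p) \<le> R"
  shows "(norm (y j n - p))\<^sup>2 \<le> (norm (z n - p))\<^sup>2 - (norm (z n - y j n))\<^sup>2 + 2 * lam n * (F + D * R)"
proof -
  have lam: "0 \<le> lam n"
    using lam_pos[OF n] by simp
  have "inner (prox_arg j n - y j n) (p - y j n) \<le> lam n * F"
    using y_variational_ineq[OF j n, of p] mult_left_mono[OF F lam] by linarith
  moreover have "inner (prox_arg j n - y j n) (p - y j n)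
      = inner (z n - y j n) (p - y j n) + lam n * inner (d j (Suc n)) (p - y j n)"
    by (simp add: prox_arg_def inner_simps right_diff_distrib)
  moreover have "\<bar>inner (d j (Suc n)) (p - y j n)\<bar> \<le> D * R"
    using Cauchy_Schwarz_ineq2[of "d j (Suc n)" "p - y j n"] D R norm_minus_commute[of p "y j n"]
      mult_mono[of "norm (d j (Suc n))" D "norm (p - y j n)" R] by (smt (verit) norm_ge_zero)
  then have "- (lam n * (D * R)) \<le> lam n * inner (d j (Suc n)) (p - y j n)"
    using mult_left_mono[of "- (D * R)" _ "lam n"] lam by (simp add: abs_le_iff)
  moreover have "(norm (z n - p))\<^sup>2 = (norm (z n - y j n))\<^sup>2 + 2 * inner (z n - y j n) (y j n - p) + (norm (y j n - p))\<^sup>2"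
    using norm_add_sq[of "z n - y j n" "y j n - p"] by simp
  moreover have "inner (z n - y j n) (y j n - p) = - inner (z n - y j n) (p - y j n)"
    by (simp add: inner_diff_right)
  moreover have "2 * lam n * (F + D * R) = 2 * (lam n * F) + 2 * (lam n * (D * R))"
    by (simp add: algebra_simps)
  ultimately show ?thesis
    by argo
qed

lemma w_dist_fixpoint_le:
  assumes j: "j \<in> I" and n: "n \<ge> 1"
    and K: "norm (u j - T j (y j n)) \<le> K" and R: "norm (T j (y j n) - p) \<le> R"
  shows "(norm (w j n - p))\<^sup>2 \<le> (norm (T j (y j n) - p))\<^sup>2 + \<alpha> n * (2 * R * K + K\<^sup>2)"
proof -
  let ?a = "T j (y j n) - p" and ?b = "u j - T j (y j n)"
  have \<alpha>: "0 < \<alpha> n" "\<alpha> n \<le> 1"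
    using \<alpha>_range[OF n] by auto
  have w: "w j n - p = ?a + \<alpha> n *\<^sub>R ?b"
    using w_eq[OF j n] by (simp add: algebra_simps)
  have "(norm (w j n - p))\<^sup>2 = (norm ?a)\<^sup>2 + 2 * (\<alpha> n * inner ?a ?b) + (\<alpha> n)\<^sup>2 * (norm ?b)\<^sup>2"
    unfolding w using norm_add_sq[of ?a "\<alpha> n *\<^sub>R ?b"] by (simp add: power_mult_distrib)
  moreover have "inner ?a ?b \<le> R * K"
    using norm_cauchy_schwarz[of ?a ?b] mult_mono[OF R K order_trans[OF norm_ge_zero R] norm_ge_zero] by linarith
  then have "\<alpha> n * inner ?a ?b \<le> \<alpha> n * (R * K)"
    using \<alpha> by (intro mult_left_mono) auto
  moreover have "(\<alpha> n)\<^sup>2 * (norm ?b)\<^sup>2 \<le> \<alpha> n * K\<^sup>2"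
    using \<alpha> K by (intro mult_mono power_mono) (auto simp: power2_eq_square mult_left_le_one_le)
  ultimately show ?thesis
    by (simp add: algebra_simps)
qed

lemma residual_le:
  assumes j: "j \<in> I" and n: "n \<ge> 1"
    and F: "f j p - f j (y j n) \<le> F" and D: "norm (d j (Suc n)) \<le> D"
    and R: "norm (y j n - p) \<le> R" and K: "norm (u j - T j (y j n)) \<le> K"
  shows "(norm (z n - y j n))\<^sup>2 + (norm (T j (y j n) - y j n))\<^sup>2
    \<le> (norm (z n - p))\<^sup>2 - (norm (w j n - p))\<^sup>2 + 2 * lam n * (F + D * R) + \<alpha> n * (2 * R * K + K\<^sup>2)"
proof -
  have TR: "norm (T j (y j n) - p) \<le> R"
    using T_nonexpansive[OF j, of "y j n" p] common_fixpoint[OF j] R by simp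
  show ?thesis
    using y_dist_fixpoint_le[OF j n F D R] w_dist_fixpoint_le[OF j n K TR]
      firmly_nonexpansive_fixpoint_ineq[OF T_firmly_nonexpansive[OF j] common_fixpoint[OF j], of "y j n"]
    by argo
qed

lemma f_gap_bound:
  obtains F where "\<And>j n. j \<in> I \<Longrightarrow> n \<ge> 1 \<Longrightarrow> f j p - f j (y j n) \<le> F"
proof -
  obtain Y where Y: "\<And>j n. j \<in> I \<Longrightarrow> n \<ge> 1 \<Longrightarrow> norm (y j n) \<le> Y"
    using y_bound by blast
  have "\<exists>B. \<forall>n\<in>{1..}. f j p - f j (y j n) \<le> B" if j: "j \<in> I" for j
  proof -
    obtain A B where "B \<ge> 0" and AB: "\<And>v. A - B * norm v \<le> f j v"
      by (rule convex_continuous_affine_minorant[OF f_continuous[OF j] f_convex[OF j]]) blast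
    then have "f j p - f j (y j n) \<le> f j p - A + B * Y" if "n \<ge> 1" for n
      using AB[of "y j n"] Y[OF j that] mult_left_mono[of "norm (y j n)" Y B] by linarith
    then show ?thesis
      by (intro exI[of _ "f j p - A + B * Y"]) auto
  qed
  then obtain F where "\<And>j n. j \<in> I \<Longrightarrow> n \<in> {1..} \<Longrightarrow> f j p - f j (y j n) \<le> F"
    using finite_family_uniform_bound[where P = "\<lambda>j n. f j p - f j (y j n)", OF finite_I] by blast
  then show ?thesis
    by (intro that[of F]) simp
qed

lemma residual_sum_le:
  obtains C where "\<And>n. n \<ge> 1 \<Longrightarrow> (\<Sum>j\<in>I. (norm (z n - y j n))\<^sup>2 + (norm (T j (y j n) - y j n))\<^sup>2)
    \<le> real (card I) * ((norm (z n - p))\<^sup>2 - (norm (x (Suc n) - p))\<^sup>2 + (lam n + \<alpha> n) * C)"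
proof -
  obtain Y where Y: "\<And>j n. j \<in> I \<Longrightarrow> n \<ge> 1 \<Longrightarrow> norm (y j n) \<le> Y"
    using y_bound by blast
  obtain K where u: "\<And>j. j \<in> I \<Longrightarrow> norm (u j) \<le> K"
    and Ty: "\<And>j n. j \<in> I \<Longrightarrow> n \<ge> 1 \<Longrightarrow> norm (T j (y j n)) \<le> K"
    using u_Ty_bound by blast
  obtain D where D: "\<And>j n. j \<in> I \<Longrightarrow> norm (d j n) \<le> D"
    using d_bound by blast
  obtain F where F: "\<And>j n. j \<in> I \<Longrightarrow> n \<ge> 1 \<Longrightarrow> f j p - f j (y j n) \<le> F"
    using f_gap_bound by blast
  define R where "R = Y + norm p"
  define C where "C = max (2 * (F + D * R)) (2 * R * (2 * K) + (2 * K)\<^sup>2)"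
  have "(\<Sum>j\<in>I. (norm (z n - y j n))\<^sup>2 + (norm (T j (y j n) - y j n))\<^sup>2)
    \<le> real (card I) * ((norm (z n - p))\<^sup>2 - (norm (x (Suc n) - p))\<^sup>2 + (lam n + \<alpha> n) * C)"
    if n: "n \<ge> 1" for n
  proof -
    have "2 * lam n * (F + D * R) + \<alpha> n * (2 * R * (2 * K) + (2 * K)\<^sup>2) \<le> (lam n + \<alpha> n) * C"
      using lam_pos[OF n] \<alpha>_range[OF n] unfolding C_def distrib_right mult.assoc
      by (intro add_mono mult_left_mono) auto
    moreover have "(norm (z n - y j n))\<^sup>2 + (norm (T j (y j n) - y j n))\<^sup>2
        \<le> (norm (z n - p))\<^sup>2 - (norm (w j n - p))\<^sup>2 + 2 * lam n * (F + D * R) + \<alpha> n * (2 * R * (2 * K) + (2 * K)\<^sup>2)"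
      if j: "j \<in> I" for j
    proof (rule residual_le[OF j n F[OF j n] D[OF j]])
      show "norm (y j n - p) \<le> R"
        using Y[OF j n] norm_triangle_ineq4[of "y j n" p] by (simp add: R_def)
      show "norm (u j - T j (y j n)) \<le> 2 * K"
        using u[OF j] Ty[OF j n] norm_triangle_ineq4[of "u j" "T j (y j n)"] by simp
    qed
    ultimately have "(\<Sum>j\<in>I. (norm (z n - y j n))\<^sup>2 + (norm (T j (y j n) - y j n))\<^sup>2)
        \<le> (\<Sum>j\<in>I. (norm (z n - p))\<^sup>2 + (lam n + \<alpha> n) * C - (norm (w j n - p))\<^sup>2)"
      by (intro sum_mono) fastforce
    also have "\<dots> = real (card I) * ((norm (z n - p))\<^sup>2 + (lam n + \<alpha> n) * C) - (\<Sum>j\<in>I. (norm (w j n - p))\<^sup>2)"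
      by (simp add: sum_subtractf)
    finally have "(\<Sum>j\<in>I. (norm (z n - y j n))\<^sup>2 + (norm (T j (y j n) - y j n))\<^sup>2)
        \<le> real (card I) * ((norm (z n - p))\<^sup>2 + (lam n + \<alpha> n) * C) - (\<Sum>j\<in>I. (norm (w j n - p))\<^sup>2)" .
    moreover have "x (Suc n) - p = (1 / real (card I)) *\<^sub>R (\<Sum>j\<in>I. w j n - p)"
      using x_eq[OF n] finite_I I_nonempty by (simp add: sum_subtractf scaleR_diff_right sum_constant_scaleR)
    then have "real (card I) * (norm (x (Suc n) - p))\<^sup>2 \<le> (\<Sum>j\<in>I. (norm (w j n - p))\<^sup>2)"
      using norm_average_sq_le[OF finite_I I_nonempty, of "\<lambda>j. w j n - p"] finite_I I_nonempty
      by (simp add: field_simps card_gt_0_iff)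
    ultimately show ?thesis
      by (simp add: algebra_simps)
  qed
  then show ?thesis
    by (rule that)
qed

lemma z_minus_x_tendsto_zero: "(\<lambda>n. z n - x n) \<longlonglongrightarrow> 0"
proof (rule Lim_null_comparison)
  show "\<forall>\<^sub>F n in sequentially. norm (z n - x n) \<le> norm (x n - x (n - 1))"
    using eventually_ge_at_top[of 1] by eventually_elim (rule norm_z_minus_x_le)
  show "(\<lambda>n. norm (x n - x (n - 1))) \<longlonglongrightarrow> 0"
    by (rule LIMSEQ_imp_Suc) (use x_asymptotically_regular in simp)
qed

lemma fixpoint_dist_gap_tendsto_zero: "(\<lambda>n. (norm (z n - p))\<^sup>2 - (norm (x (Suc n) - p))\<^sup>2) \<longlonglongrightarrow> 0"
proof -
  obtain X where X: "\<And>n. norm (x n) \<le> X"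
    using x_bound by blast
  have "\<forall>\<^sub>F n in sequentially. norm ((norm (z n - p))\<^sup>2 - (norm (x (Suc n) - p))\<^sup>2)
      \<le> norm (z n - x (Suc n)) * (4 * X + 2 * norm p)"
    using eventually_ge_at_top[of 1]
  proof eventually_elim
    case (elim n)
    have "norm (z n - p) + norm (x (Suc n) - p) \<le> 4 * X + 2 * norm p"
      using norm_z_le[OF X elim] X[of "Suc n"] norm_triangle_ineq4[of "z n" p]
        norm_triangle_ineq4[of "x (Suc n)" p] by linarith
    then have "norm (z n - x (Suc n)) * (norm (z n - p) + norm (x (Suc n) - p))
        \<le> norm (z n - x (Suc n)) * (4 * X + 2 * norm p)"
      by (rule mult_left_mono) simp
    then show ?case
      using norm_sq_diff_le[of "z n - p" "x (Suc n) - p"] by simp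
  qed
  moreover have "(\<lambda>n. x (Suc n) - x n) \<longlonglongrightarrow> 0"
    using x_asymptotically_regular by (simp add: tendsto_norm_zero_iff)
  then have "(\<lambda>n. z n - x (Suc n)) \<longlonglongrightarrow> 0"
    using tendsto_diff[OF z_minus_x_tendsto_zero] by fastforce
  then have "(\<lambda>n. norm (z n - x (Suc n)) * (4 * X + 2 * norm p)) \<longlonglongrightarrow> 0 * (4 * X + 2 * norm p)"
    by (intro tendsto_mult tendsto_const) (simp add: tendsto_norm_zero_iff)
  ultimately show ?thesis
    by (intro Lim_null_comparison[of "\<lambda>n. (norm (z n - p))\<^sup>2 - (norm (x (Suc n) - p))\<^sup>2"]) simp_all
qed

lemma residuals_sq_tendsto_zero:
  assumes i: "i \<in> I"
  shows "(\<lambda>n. (norm (z n - y i n))\<^sup>2 + (norm (T i (y i n) - y i n))\<^sup>2) \<longlonglongrightarrow> 0"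
proof -
  obtain C where C: "\<And>n. n \<ge> 1 \<Longrightarrow> (\<Sum>j\<in>I. (norm (z n - y j n))\<^sup>2 + (norm (T j (y j n) - y j n))\<^sup>2)
    \<le> real (card I) * ((norm (z n - p))\<^sup>2 - (norm (x (Suc n) - p))\<^sup>2 + (lam n + \<alpha> n) * C)"
    using residual_sum_le by blast
  have "\<forall>\<^sub>F n in sequentially. norm ((norm (z n - y i n))\<^sup>2 + (norm (T i (y i n) - y i n))\<^sup>2)
      \<le> real (card I) * ((norm (z n - p))\<^sup>2 - (norm (x (Suc n) - p))\<^sup>2 + (lam n + \<alpha> n) * C)"
    using eventually_ge_at_top[of 1]
  proof eventually_elim
    case (elim n)
    have "(norm (z n - y i n))\<^sup>2 + (norm (T i (y i n) - y i n))\<^sup>2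
        \<le> (\<Sum>j\<in>I. (norm (z n - y j n))\<^sup>2 + (norm (T j (y j n) - y j n))\<^sup>2)"
      using i finite_I by (intro member_le_sum) auto
    then show ?case
      using C[OF elim] by simp
  qed
  moreover have "(\<lambda>n. real (card I) * ((norm (z n - p))\<^sup>2 - (norm (x (Suc n) - p))\<^sup>2 + (lam n + \<alpha> n) * C))
      \<longlonglongrightarrow> real (card I) * (0 + (0 + 0) * C)"
    by (intro tendsto_intros fixpoint_dist_gap_tendsto_zero lam_tendsto \<alpha>_tendsto)
  ultimately show ?thesis
    by (intro Lim_null_comparison[of "\<lambda>n. (norm (z n - y i n))\<^sup>2 + (norm (T i (y i n) - y i n))\<^sup>2"]) simp_all
qed

theorem residuals_tendsto_zero:
  assumes i: "i \<in> I"
  shows "(\<lambda>n. norm (z n - y i n)) \<longlonglongrightarrow> 0"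
    and "(\<lambda>n. norm (x n - y i n)) \<longlonglongrightarrow> 0"
    and "(\<lambda>n. norm (T i (x n) - x n)) \<longlonglongrightarrow> 0"
proof -
  let ?r = "\<lambda>n. sqrt ((norm (z n - y i n))\<^sup>2 + (norm (T i (y i n) - y i n))\<^sup>2)"
  have r: "?r \<longlonglongrightarrow> 0"
    using tendsto_real_sqrt[OF residuals_sq_tendsto_zero[OF i]] by simp
  have zy: "(\<lambda>n. z n - y i n) \<longlonglongrightarrow> 0"
    by (rule Lim_null_comparison[OF always_eventually r]) (simp add: real_le_rsqrt)
  have Ty: "(\<lambda>n. T i (y i n) - y i n) \<longlonglongrightarrow> 0"
    by (rule Lim_null_comparison[OF always_eventually r]) (simp add: real_le_rsqrt)
  from zy show "(\<lambda>n. norm (z n - y i n)) \<longlonglongrightarrow> 0"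
    by (simp add: tendsto_norm_zero_iff)
  have xy: "(\<lambda>n. x n - y i n) \<longlonglongrightarrow> 0"
    using tendsto_diff[OF zy z_minus_x_tendsto_zero] by simp
  then show "(\<lambda>n. norm (x n - y i n)) \<longlonglongrightarrow> 0"
    by (simp add: tendsto_norm_zero_iff)
  have "norm (T i (x n) - x n) \<le> 2 * norm (x n - y i n) + norm (T i (y i n) - y i n)" for n
    using T_nonexpansive[OF i, of "x n" "y i n"] norm_triangle_ineq[of "T i (x n) - T i (y i n)" "T i (y i n) - x n"]
      norm_triangle_ineq[of "T i (y i n) - y i n" "y i n - x n"] norm_minus_commute[of "y i n" "x n"] by simp
  moreover have "(\<lambda>n. 2 * norm (x n - y i n) + norm (T i (y i n) - y i n)) \<longlonglongrightarrow> 2 * 0 + 0"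
    using xy Ty by (intro tendsto_intros) (simp_all add: tendsto_norm_zero_iff)
  ultimately have "(\<lambda>n. T i (x n) - x n) \<longlonglongrightarrow> 0"
    by (intro Lim_null_comparison[of "\<lambda>n. T i (x n) - x n"]) (simp_all add: always_eventually)
  then show "(\<lambda>n. norm (T i (x n) - x n)) \<longlonglongrightarrow> 0"
    by (simp add: tendsto_norm_zero_iff)
qed

end

theorem lemma7:
  fixes M :: nat
    and f h :: "nat \<Rightarrow> 'a::{real_inner, complete_space} \<Rightarrow> real"
    and grad :: "nat \<Rightarrow> 'a \<Rightarrow> 'a"
    and T :: "nat \<Rightarrow> 'a \<Rightarrow> 'a"
    and L :: "nat \<Rightarrow> real"
    and \<theta> lam \<beta> \<alpha> :: "nat \<Rightarrow> real"
    and \<sigma> :: real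
    and x z :: "nat \<Rightarrow> 'a"
    and u :: "nat \<Rightarrow> 'a"
    and d y w :: "nat \<Rightarrow> nat \<Rightarrow> 'a"
  assumes M: "M \<ge> 1"
    and A1: "\<And>i. i \<in> {1..M} \<Longrightarrow> continuous_on UNIV (f i) \<and> convex_on UNIV (f i)"
    and A2_convex: "\<And>i. i \<in> {1..M} \<Longrightarrow> convex_on UNIV (h i)"
    and A2_grad: "\<And>i v. i \<in> {1..M} \<Longrightarrow> (h i has_derivative (\<lambda>t. inner (grad i v) t)) (at v)"
    and A2_L: "\<And>i. i \<in> {1..M} \<Longrightarrow> L i > 0"
    and A2_lip: "\<And>i v v'. i \<in> {1..M} \<Longrightarrow> norm (grad i v - grad i v') \<le> (1 / L i) * norm (v - v')"
    and A3: "\<And>i. i \<in> {1..M} \<Longrightarrow> firmly_nonexpansive (T i)"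
    and A4_S: "(\<Inter>i\<in>{1..M}. {p. T i p = p}) \<noteq> {}"
    and A4_Omega: "\<exists>xh \<in> (\<Inter>i\<in>{1..M}. {p. T i p = p}).
                     \<forall>v \<in> (\<Inter>i\<in>{1..M}. {p. T i p = p}).
                       (\<Sum>i\<in>{1..M}. f i xh + h i xh) \<le> (\<Sum>i\<in>{1..M}. f i v + h i v)"
    and dec_\<theta>: "\<And>n. n \<ge> 1 \<Longrightarrow> \<theta> (Suc n) \<le> \<theta> n"
    and dec_lam: "\<And>n. n \<ge> 1 \<Longrightarrow> lam (Suc n) \<le> lam n"
    and dec_\<beta>: "\<And>n. n \<ge> 1 \<Longrightarrow> \<beta> (Suc n) \<le> \<beta> n"
    and dec_\<alpha>: "\<And>n. n \<ge> 1 \<Longrightarrow> \<alpha> (Suc n) \<le> \<alpha> n"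
    and lim_\<theta>: "\<theta> \<longlonglongrightarrow> 0" and lim_lam: "lam \<longlonglongrightarrow> 0"
    and lim_\<beta>: "\<beta> \<longlonglongrightarrow> 0" and lim_\<alpha>: "\<alpha> \<longlonglongrightarrow> 0"
    and rng_\<theta>: "\<And>n. n \<ge> 1 \<Longrightarrow> 0 \<le> \<theta> n \<and> \<theta> n < 1"
    and rng_lam: "\<And>n. n \<ge> 1 \<Longrightarrow> 0 < lam n \<and> (\<forall>i\<in>{1..M}. lam n \<le> 2 * L i)"
    and rng_\<beta>: "\<And>n. n \<ge> 1 \<Longrightarrow> 0 < \<beta> n \<and> \<beta> n \<le> 1"
    and rng_\<alpha>: "\<And>n. n \<ge> 1 \<Longrightarrow> 0 < \<alpha> n \<and> \<alpha> n \<le> 1"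
    and C1: "\<not> summable \<alpha>"
    and C2: "(\<lambda>n. (1 / \<alpha> (Suc n)) * \<bar>1 / lam (Suc n) - 1 / lam n\<bar>) \<longlonglongrightarrow> 0"
    and C3: "(\<lambda>n. (1 / lam (Suc n)) * \<bar>1 - \<alpha> n / \<alpha> (Suc n)\<bar>) \<longlonglongrightarrow> 0"
    and C4: "(\<lambda>n. \<alpha> n / lam n) \<longlonglongrightarrow> 0"
    and C5: "(\<lambda>n. \<theta> n / (\<alpha> (Suc n) * lam (Suc n))) \<longlonglongrightarrow> 0"
    and C6: "\<sigma> \<ge> 1" "\<And>n. n \<ge> 1 \<Longrightarrow> lam n / lam (Suc n) \<le> \<sigma>"
    and C7: "(\<lambda>n. \<beta> n / \<alpha> (Suc n)) \<longlonglongrightarrow> 0"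
    and init_d: "\<And>i. i \<in> {1..M} \<Longrightarrow> d i 1 = - grad i (z 0)"
    and alg_z: "\<And>n. n \<ge> 1 \<Longrightarrow> z n = x n + \<theta> n *\<^sub>R (x n - x (n - 1))"
    and alg_d: "\<And>i n. i \<in> {1..M} \<Longrightarrow> n \<ge> 1 \<Longrightarrow>
                  d i (Suc n) = - grad i (z n) + \<beta> n *\<^sub>R d i n"
    and alg_y: "\<And>i n. i \<in> {1..M} \<Longrightarrow> n \<ge> 1 \<Longrightarrow>
                  y i n = prox (lam n) (f i) (z n + lam n *\<^sub>R d i (Suc n))"
    and alg_w: "\<And>i n. i \<in> {1..M} \<Longrightarrow> n \<ge> 1 \<Longrightarrow>
                  w i n = \<alpha> n *\<^sub>R u i + (1 - \<alpha> n) *\<^sub>R T i (y i n)"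
    and alg_x: "\<And>n. n \<ge> 1 \<Longrightarrow> x (Suc n) = (1 / real M) *\<^sub>R (\<Sum>i\<in>{1..M}. w i n)"
    and bdd_y: "\<And>i. i \<in> {1..M} \<Longrightarrow> bounded ((\<lambda>n. y i n) ` {1..})"
  shows "\<forall>i\<in>{1..M}.
           (\<lambda>n. norm (z n - y i n)) \<longlonglongrightarrow> 0 \<and>
           (\<lambda>n. norm (x n - y i n)) \<longlonglongrightarrow> 0 \<and>
           (\<lambda>n. norm (T i (x n) - x n)) \<longlonglongrightarrow> 0"
proof -
  \<comment> \<open>Not needed: the bound lam n \<le> 2 * L i (lam n \<longrightarrow> 0 gives lam n \<le> L i eventually),
    (C4), (C6), monotonicity of lam and \<alpha>, \<theta> \<longrightarrow> 0, the initial value of d, and \<Omega> \<noteq> {}.\<close>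
  obtain p where p: "\<And>i. i \<in> {1..M} \<Longrightarrow> T i p = p"
    using A4_S by blast
  interpret accelerated_parallel_algorithm "{1..M}" f h grad T L \<theta> lam \<beta> \<alpha> x z u d y w p
  proof
    show "finite {1..M}"
      by simp
    show "{1..M} \<noteq> {}"
      using M by simp
    show "continuous_on UNIV (f i)" "convex_on UNIV (f i)" if "i \<in> {1..M}" for i
      using A1[OF that] by auto
    show "0 < lam n" if "n \<ge> 1" for n
      using rng_lam[OF that] by auto
    show "x (Suc n) = (1 / real (card {1..M})) *\<^sub>R (\<Sum>i\<in>{1..M}. w i n)" if "n \<ge> 1" for n
      using alg_x[OF that] by simp
  qed (fact assms p)+
  show ?thesis
    using residuals_tendsto_zero by blast
qed

end
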